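(* Let $S$ be a Polish space with Borel $\sigma$-algebra $\mathscr{B}_S$, and let $\mu_0$ be a diffuse probability measure on $(S,\mathscr{B}_S)$. Let $\boldsymbol{\mu}=\sum_{j\ge1}\mathbf{w}_j\delta_{\boldsymbol{\xi}_j}+\big(1-\sum_{j\ge1}\mathbf{w}_j\big)\mu_0$ be an exchangeable stick-breaking process (ESB) with base measure $\mu_0$, whose exchangeable $[0,1]$-valued length variables $(\mathbf{v}_i)_{i\ge1}$ are directed by the random probability measure $\boldsymbol{\nu}$ on $[0,1]$. Put $\nu_0=\mathbb{E}[\boldsymbol{\nu}]$. (i) If there exists $\varepsilon>0$ such that $(0,\varepsilon)$ is contained in the support of $\nu_0$, then $\boldsymbol{\mu}$ has full support. (ii) $\boldsymbol{\mu}$ is proper if and only if $\boldsymbol{\nu}(\{0\})<1$ almost surely.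
   Context: A species sampling process on a Polish space $S$ with (diffuse) base measure $\mu_0$ is a random probability measure $\boldsymbol{\mu}=\sum_{j\ge1}\mathbf{w}_j\delta_{\boldsymbol{\xi}_j}+(1-\sum_{j\ge1}\mathbf{w}_j)\mu_0$, where $(\mathbf{w}_j)_{j\ge1}$ are non-negative random variables with $\sum_j\mathbf{w}_j\le1$ a.s., independent of the atoms $(\boldsymbol{\xi}_j)_{j\ge1}$, which are i.i.d. with law $\mu_0$. It is proper if $\sum_j\mathbf{w}_j=1$ a.s. An ESB is a species sampling process whose weights are given by stick-breaking, $\mathbf{w}_1=\mathbf{v}_1$, $\mathbf{w}_j=\mathbf{v}_j\prod_{i=1}^{j-1}(1-\mathbf{v}_i)$ for $j\ge2$, where $(\mathbf{v}_i)_{i\ge1}$ is an exchangeable sequence of $[0,1]$-valued random variables (independent of the atoms); by de Finetti's theorem the $\mathbf{v}_i$ are conditionally i.i.d. given a random probability measure $\boldsymbol{\nu}$ on $[0,1]$ (the directing measure). "Full support" means: the topological support, with respect to the weak topology on the space of probability measures, of the law of $\boldsymbol{\mu}$ is the set of all probability measures whose support is contained in the support of $\mu_0$ (in particular, all probability measures on $S$ when $\mu_0$ has support $S$). *)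

theory Defs
  imports "HOL-Probability.Probability"
begin

text \<open>Stick-breaking weights (indices start at 0):
  w 0 = v 0, w j = v j * prod_{i<j} (1 - v i).\<close>
definition sb_weight :: "(nat \<Rightarrow> 'b \<Rightarrow> real) \<Rightarrow> nat \<Rightarrow> 'b \<Rightarrow> real" where
  "sb_weight v j \<omega> = v j \<omega> * (\<Prod>i<j. 1 - v i \<omega>)"

definition ssp_measure ::
  "(nat \<Rightarrow> 'b \<Rightarrow> real) \<Rightarrow> (nat \<Rightarrow> 'b \<Rightarrow> 'a::topological_space) \<Rightarrow> 'a measure \<Rightarrow> 'b \<Rightarrow> 'a measure" where
  "ssp_measure w \<xi> \<mu>0 \<omega> =
     measure_of UNIV (sets borel)
       (\<lambda>A. (\<Sum>j. ennreal (w j \<omega>) * indicator A (\<xi> j \<omega>))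
            + ennreal (1 - (\<Sum>j. w j \<omega>)) * emeasure \<mu>0 A)"

definition msupport :: "'a::topological_space measure \<Rightarrow> 'a set" where
  "msupport P = {x. \<forall>U. open U \<longrightarrow> x \<in> U \<longrightarrow> emeasure P U > 0}"

definition borel_probs :: "'a::topological_space measure set" where
  "borel_probs = {P. prob_space P \<and> sets P = sets borel}"

definition weak_nbhd :: "'a::topological_space measure \<Rightarrow> ('a \<Rightarrow> real) list \<Rightarrow> real \<Rightarrow> 'a measure set" where
  "weak_nbhd P fs \<epsilon> =
     {Q \<in> borel_probs. \<forall>f\<in>set fs. \<bar>(\<integral>x. f x \<partial>Q) - (\<integral>x. f x \<partial>P)\<bar> < \<epsilon>}"

definition bounded_continuous :: "('a::topological_space \<Rightarrow> real) \<Rightarrow> bool" where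
  "bounded_continuous f \<longleftrightarrow> continuous_on UNIV f \<and> bounded (range f)"

definition law_support :: "'b measure \<Rightarrow> ('b \<Rightarrow> 'a::topological_space measure) \<Rightarrow> 'a measure set" where
  "law_support M \<mu> =
     {P \<in> borel_probs. \<forall>fs \<epsilon>. (\<forall>f\<in>set fs. bounded_continuous f) \<longrightarrow> \<epsilon> > 0 \<longrightarrow>
        measure M {\<omega> \<in> space M. \<mu> \<omega> \<in> weak_nbhd P fs \<epsilon>} > 0}"

definition full_support :: "'b measure \<Rightarrow> ('b \<Rightarrow> 'a::topological_space measure) \<Rightarrow> 'a measure \<Rightarrow> bool" where
  "full_support M \<mu> \<mu>0 \<longleftrightarrow> law_support M \<mu> = {P \<in> borel_probs. msupport P \<subseteq> msupport \<mu>0}"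

definition exchangeable :: "'b measure \<Rightarrow> (nat \<Rightarrow> 'b \<Rightarrow> real) \<Rightarrow> bool" where
  "exchangeable M v \<longleftrightarrow> (\<forall>n \<pi>. \<pi> permutes {..<n} \<longrightarrow>
     distr M (PiM UNIV (\<lambda>_. borel)) (\<lambda>\<omega> i. v (\<pi> i) \<omega>) =
     distr M (PiM UNIV (\<lambda>_. borel)) (\<lambda>\<omega> i. v i \<omega>))"

definition random_prob_01 :: "'b measure \<Rightarrow> ('b \<Rightarrow> real measure) \<Rightarrow> bool" where
  "random_prob_01 M \<nu> \<longleftrightarrow>
     (\<forall>\<omega>\<in>space M. prob_space (\<nu> \<omega>) \<and> sets (\<nu> \<omega>) = sets borel \<and> emeasure (\<nu> \<omega>) {0..1} = 1) \<and>
     (\<forall>B\<in>sets borel. (\<lambda>\<omega>. measure (\<nu> \<omega>) B) \<in> borel_measurable M)"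

definition sigma_of_rm :: "'b measure \<Rightarrow> ('b \<Rightarrow> real measure) \<Rightarrow> 'b set set" where
  "sigma_of_rm M \<nu> = sigma_sets (space M)
     {(\<lambda>\<omega>. measure (\<nu> \<omega>) C) -` D \<inter> space M | C D. C \<in> sets borel \<and> D \<in> sets borel}"

text \<open>nu directs v: conditionally on nu, the v i are i.i.d. with law nu, i.e.
  P(v 0 : B 0, ..., v (n-1) : B (n-1) | nu) = prod_i nu(B i) a.s.\<close>
definition directs :: "'b measure \<Rightarrow> ('b \<Rightarrow> real measure) \<Rightarrow> (nat \<Rightarrow> 'b \<Rightarrow> real) \<Rightarrow> bool" where
  "directs M \<nu> v \<longleftrightarrow> (\<forall>n (B :: nat \<Rightarrow> real set) A.
     (\<forall>i. B i \<in> sets borel) \<longrightarrow> A \<in> sigma_of_rm M \<nu> \<longrightarrow>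
     measure M (A \<inter> {\<omega> \<in> space M. \<forall>i<n. v i \<omega> \<in> B i}) =
       (\<integral>\<omega>. indicator A \<omega> * (\<Prod>i<n. measure (\<nu> \<omega>) (B i)) \<partial>M))"

definition mean_measure :: "'b measure \<Rightarrow> ('b \<Rightarrow> real measure) \<Rightarrow> real measure" where
  "mean_measure M \<nu> = measure_of UNIV (sets borel) (\<lambda>B. \<integral>\<^sup>+\<omega>. emeasure (\<nu> \<omega>) B \<partial>M)"

end

(*
  Given \<nu>, the lengths v i are i.i.d. with law \<nu>, and the mass not yet assigned after n steps
  is (1 - v 0) * ... * (1 - v (n - 1)). It tends to 0 as soon as infinitely many lengths exceed
  some d > 0, which by a conditional Borel-Cantelli argument happens almost surely where
  \<nu>{0} < 1; where \<nu>{0} = 1 all lengths vanish and nothing is assigned.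

  Almost surely no atom \<xi> j falls into a \<mu>0-null open set, so testing against bump functions
  shows that the law of \<mu> charges only measures supported in supp \<mu>0. Conversely, approximate a
  target P with supp P \<subseteq> supp \<mu>0 weakly by p 0 \<delta>(x 0) + ... + p (L - 1) \<delta>(x (L - 1)) with
  x l \<in> supp P. If the first N lengths all lie in a short interval (a, b) \<subseteq> (0, \<epsilon>), then
  consecutive blocks of sticks carry masses close to p 0, ..., p (L - 1) and little mass is left;
  if moreover the atoms of block l lie close to x l, then \<mu> is weakly close to P. The two events
  are independent and have positive probability, because (a, b) meets the support of \<nu>0 = E \<nu>
  and x l \<in> supp \<mu>0.
*)
theory Submission
  imports Defs
begin

lemma sets_ssp_measure [simp, measurable_cong]: "sets (ssp_measure W X \<mu>0 \<omega>) = sets borel"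
  unfolding ssp_measure_def by (simp add: sets.sigma_sets_eq[of borel, simplified])

lemma space_ssp_measure [simp]: "space (ssp_measure W X \<mu>0 \<omega>) = UNIV"
  unfolding ssp_measure_def by simp

lemma summable_mult_bounded:
  fixes w g :: "nat \<Rightarrow> real"
  assumes "summable w" and "\<And>j. 0 \<le> w j" and "\<And>j. \<bar>g j\<bar> \<le> B"
  shows "summable (\<lambda>j. w j * g j)"
proof (rule summable_comparison_test[of _ "\<lambda>j. w j * B"])
  show "\<exists>N. \<forall>n\<ge>N. norm (w n * g n) \<le> w n * B"
    using assms by (auto simp: abs_mult intro!: mult_left_mono)
  show "summable (\<lambda>j. w j * B)" using assms(1) by (rule summable_mult2)
qed

context
  fixes W :: "nat \<Rightarrow> 'b \<Rightarrow> real" and X :: "nat \<Rightarrow> 'b \<Rightarrow> 'a::topological_space"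
    and \<mu>0 :: "'a measure" and \<omega> :: 'b
  assumes W_nonneg: "\<And>j. 0 \<le> W j \<omega>" and summable_W: "summable (\<lambda>j. W j \<omega>)"
    and suminf_W_le_1: "(\<Sum>j. W j \<omega>) \<le> 1"
    and mu0_prob: "prob_space \<mu>0" and mu0_sets: "sets \<mu>0 = sets borel"
begin

lemma measure_space_ssp:
  "measure_space UNIV (sets borel)
    (\<lambda>A. (\<Sum>j. ennreal (W j \<omega>) * indicator A (X j \<omega>)) + ennreal (1 - (\<Sum>j. W j \<omega>)) * emeasure \<mu>0 A)"
  unfolding measure_space_def
proof (intro conjI)
  show "sigma_algebra UNIV (sets (borel :: 'a measure))"
    using sets.sigma_algebra_axioms[of "borel :: 'a measure"] by simp
  show "positive (sets borel)
      (\<lambda>A. (\<Sum>j. ennreal (W j \<omega>) * indicator A (X j \<omega>)) + ennreal (1 - (\<Sum>j. W j \<omega>)) * emeasure \<mu>0 A)"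
    by (simp add: positive_def)
  show "countably_additive (sets borel)
      (\<lambda>A. (\<Sum>j. ennreal (W j \<omega>) * indicator A (X j \<omega>)) + ennreal (1 - (\<Sum>j. W j \<omega>)) * emeasure \<mu>0 A)"
    unfolding countably_additive_def
  proof (intro allI impI)
    fix A :: "nat \<Rightarrow> 'a set"
    assume A: "range A \<subseteq> sets borel" and disj: "disjoint_family A"
    have swap: "(\<Sum>i. \<Sum>j. ennreal (W j \<omega>) * indicator (A i) (X j \<omega>))
        = (\<Sum>j. \<Sum>i. ennreal (W j \<omega>) * indicator (A i) (X j \<omega>))"
    proof -
      have "(\<Sum>j. \<Sum>i. ennreal (W j \<omega>) * indicator (A i) (X j \<omega>))
          = (\<integral>\<^sup>+j. (\<Sum>i. ennreal (W j \<omega>) * indicator (A i) (X j \<omega>)) \<partial>count_space UNIV)"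
        by (simp add: nn_integral_count_space_nat)
      also have "\<dots> = (\<Sum>i. \<integral>\<^sup>+j. ennreal (W j \<omega>) * indicator (A i) (X j \<omega>) \<partial>count_space UNIV)"
        by (rule nn_integral_suminf) simp
      finally show ?thesis
        by (simp add: nn_integral_count_space_nat)
    qed
    have "(\<Sum>i. emeasure \<mu>0 (A i)) = emeasure \<mu>0 (\<Union>i. A i)"
      using A disj mu0_sets by (intro suminf_emeasure) auto
    then show "(\<Sum>i. (\<Sum>j. ennreal (W j \<omega>) * indicator (A i) (X j \<omega>))
          + ennreal (1 - (\<Sum>j. W j \<omega>)) * emeasure \<mu>0 (A i))
        = (\<Sum>j. ennreal (W j \<omega>) * indicator (\<Union>i. A i) (X j \<omega>))
          + ennreal (1 - (\<Sum>j. W j \<omega>)) * emeasure \<mu>0 (\<Union>i. A i)"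
      by (simp add: suminf_add[symmetric] swap suminf_indicator[OF disj])
  qed
qed

lemma emeasure_ssp_measure:
  assumes "A \<in> sets borel"
  shows "emeasure (ssp_measure W X \<mu>0 \<omega>) A
    = (\<Sum>j. ennreal (W j \<omega>) * indicator A (X j \<omega>)) + ennreal (1 - (\<Sum>j. W j \<omega>)) * emeasure \<mu>0 A"
  using measure_space_ssp assms
  unfolding ssp_measure_def emeasure_measure_of_conv
  by (simp add: sets.sigma_sets_eq[of borel, simplified])

lemma prob_space_ssp_measure: "prob_space (ssp_measure W X \<mu>0 \<omega>)"
proof
  have "emeasure (ssp_measure W X \<mu>0 \<omega>) UNIV = (\<Sum>j. ennreal (W j \<omega>)) + ennreal (1 - (\<Sum>j. W j \<omega>))"
    using emeasure_ssp_measure[of UNIV] prob_space.emeasure_space_1[OF mu0_prob]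
    by (simp add: sets_eq_imp_space_eq[OF mu0_sets])
  also have "\<dots> = 1"
    using suminf_ennreal2[OF W_nonneg summable_W] suminf_W_le_1 W_nonneg summable_W
    by (simp add: ennreal_plus[symmetric] suminf_nonneg del: ennreal_plus)
  finally show "emeasure (ssp_measure W X \<mu>0 \<omega>) (space (ssp_measure W X \<mu>0 \<omega>)) = 1"
    by simp
qed

lemma nn_integral_ssp_measure:
  fixes g :: "'a \<Rightarrow> ennreal"
  assumes "g \<in> borel_measurable borel"
  shows "(\<integral>\<^sup>+x. g x \<partial>ssp_measure W X \<mu>0 \<omega>)
    = (\<Sum>j. ennreal (W j \<omega>) * g (X j \<omega>)) + ennreal (1 - (\<Sum>j. W j \<omega>)) * (\<integral>\<^sup>+x. g x \<partial>\<mu>0)"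
  using assms
proof (induction rule: borel_measurable_induct)
  case (cong f g)
  then have "f = g" by auto
  with cong show ?case by simp
next
  case (set A)
  then show ?case
    using emeasure_ssp_measure[OF set] mu0_sets by (simp add: nn_integral_indicator)
next
  case (mult u a)
  have "u \<in> borel_measurable \<mu>0"
    using mult(2) by (simp add: measurable_cong_sets[OF mu0_sets refl])
  then show ?case
    using mult by (simp add: nn_integral_cmult ennreal_suminf_cmult[symmetric] distrib_left ac_simps
        del: ennreal_suminf_cmult)
next
  case (add u v)
  have "u \<in> borel_measurable \<mu>0" "v \<in> borel_measurable \<mu>0"
    using add by (simp_all add: measurable_cong_sets[OF mu0_sets refl])
  moreover have "(\<Sum>j. ennreal (W j \<omega>) * (v (X j \<omega>) + u (X j \<omega>)))
      = (\<Sum>j. ennreal (W j \<omega>) * v (X j \<omega>)) + (\<Sum>j. ennreal (W j \<omega>) * u (X j \<omega>))"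
    by (simp add: distrib_left suminf_add[symmetric])
  ultimately show ?case
    using add by (simp add: nn_integral_add algebra_simps)
next
  case (seq U)
  have inc: "incseq U" using seq by blast
  have "U i \<in> borel_measurable \<mu>0" for i
    using seq(1) by (simp add: measurable_cong_sets[OF mu0_sets refl])
  then have lim0: "(\<integral>\<^sup>+x. (SUP i. U i) x \<partial>\<mu>0) = (SUP i. \<integral>\<^sup>+x. U i x \<partial>\<mu>0)"
    using nn_integral_monotone_convergence_SUP[OF inc] by (simp add: image_image)
  have "(\<integral>\<^sup>+x. (SUP i. U i) x \<partial>ssp_measure W X \<mu>0 \<omega>) = (SUP i. \<integral>\<^sup>+x. U i x \<partial>ssp_measure W X \<mu>0 \<omega>)"
    using nn_integral_monotone_convergence_SUP[OF inc] seq(1) by (simp add: image_image)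
  moreover have "(\<Sum>j. ennreal (W j \<omega>) * (SUP i. U i) (X j \<omega>))
      = (SUP i. \<Sum>j. ennreal (W j \<omega>) * U i (X j \<omega>))"
  proof -
    have "(\<Sum>j. ennreal (W j \<omega>) * (SUP i. U i) (X j \<omega>)) = (\<Sum>j. SUP i. ennreal (W j \<omega>) * U i (X j \<omega>))"
      by (simp add: image_image SUP_mult_left_ennreal)
    also have "\<dots> = (SUP i. \<Sum>j. ennreal (W j \<omega>) * U i (X j \<omega>))"
      using inc unfolding incseq_def le_fun_def
      by (intro ennreal_suminf_SUP_eq) (auto simp: incseq_def intro: mult_left_mono)
    finally show ?thesis .
  qed
  moreover have "incseq (\<lambda>i. \<Sum>j. ennreal (W j \<omega>) * U i (X j \<omega>))"
    using inc unfolding incseq_def le_fun_def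
    by (intro allI impI suminf_le) (auto intro: mult_left_mono)
  moreover have "incseq (\<lambda>i. ennreal (1 - (\<Sum>j. W j \<omega>)) * (\<integral>\<^sup>+x. U i x \<partial>\<mu>0))"
    using inc unfolding incseq_def le_fun_def
    by (intro allI impI mult_left_mono nn_integral_mono) auto
  ultimately show ?case
    unfolding lim0 seq.IH SUP_mult_left_ennreal by (simp add: ennreal_SUP_add)
qed

lemma integral_ssp_measure:
  fixes f :: "'a \<Rightarrow> real"
  assumes f_borel: "f \<in> borel_measurable borel" and f_bound: "\<And>x. \<bar>f x\<bar> \<le> B"
  shows "(\<integral>x. f x \<partial>ssp_measure W X \<mu>0 \<omega>)
    = (\<Sum>j. W j \<omega> * f (X j \<omega>)) + (1 - (\<Sum>j. W j \<omega>)) * (\<integral>x. f x \<partial>\<mu>0)"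
proof -
  interpret m: prob_space "ssp_measure W X \<mu>0 \<omega>" by (rule prob_space_ssp_measure)
  interpret p0: prob_space \<mu>0 by (rule mu0_prob)
  define c where "c = 1 - (\<Sum>j. W j \<omega>)"
  have c_nonneg: "0 \<le> c" using suminf_W_le_1 by (simp add: c_def)
  \<comment> \<open>Shift f by B to reduce to the formula for nonnegative integrands.\<close>
  define g where "g x = f x + B" for x
  have g_nonneg: "0 \<le> g x" for x unfolding g_def using f_bound[of x] by linarith
  have g_bound: "\<bar>g x\<bar> \<le> 2 * B" for x unfolding g_def using f_bound[of x] by linarith
  have g_borel: "g \<in> borel_measurable borel" unfolding g_def using f_borel by measurable
  have borel_mu0: "h \<in> borel_measurable borel \<Longrightarrow> h \<in> borel_measurable \<mu>0" for h :: "'a \<Rightarrow> real"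
    by (simp add: measurable_cong_sets[OF mu0_sets refl])
  have int_g: "integrable (ssp_measure W X \<mu>0 \<omega>) g" "integrable \<mu>0 g"
    using g_bound g_borel borel_mu0[OF g_borel]
    by (auto intro: m.integrable_const_bound[of _ "2 * B"] p0.integrable_const_bound[of _ "2 * B"])
  have int_f: "integrable (ssp_measure W X \<mu>0 \<omega>) f" "integrable \<mu>0 f"
    using f_bound f_borel borel_mu0[OF f_borel]
    by (auto intro: m.integrable_const_bound[of _ B] p0.integrable_const_bound[of _ B])
  have summable_Wg: "summable (\<lambda>j. W j \<omega> * g (X j \<omega>))"
    using summable_W W_nonneg g_bound by (rule summable_mult_bounded)
  have summable_Wf: "summable (\<lambda>j. W j \<omega> * f (X j \<omega>))"
    using summable_W W_nonneg f_bound by (rule summable_mult_bounded)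
  have sum_Wg_nonneg: "0 \<le> (\<Sum>j. W j \<omega> * g (X j \<omega>))"
    using summable_Wg W_nonneg g_nonneg by (intro suminf_nonneg) auto
  have "ennreal (\<integral>x. g x \<partial>ssp_measure W X \<mu>0 \<omega>) = (\<integral>\<^sup>+x. ennreal (g x) \<partial>ssp_measure W X \<mu>0 \<omega>)"
    using int_g g_nonneg by (intro nn_integral_eq_integral[symmetric]) auto
  also have "\<dots> = (\<Sum>j. ennreal (W j \<omega> * g (X j \<omega>))) + ennreal c * (\<integral>\<^sup>+x. ennreal (g x) \<partial>\<mu>0)"
    using nn_integral_ssp_measure g_borel W_nonneg g_nonneg by (simp add: c_def ennreal_mult)
  also have "\<dots> = ennreal ((\<Sum>j. W j \<omega> * g (X j \<omega>)) + c * (\<integral>x. g x \<partial>\<mu>0))"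
    using suminf_ennreal2[OF _ summable_Wg] W_nonneg g_nonneg c_nonneg sum_Wg_nonneg
      nn_integral_eq_integral[OF int_g(2)]
    by (simp add: ennreal_mult ennreal_plus integral_nonneg)
  finally have "(\<integral>x. g x \<partial>ssp_measure W X \<mu>0 \<omega>) = (\<Sum>j. W j \<omega> * g (X j \<omega>)) + c * (\<integral>x. g x \<partial>\<mu>0)"
    using sum_Wg_nonneg c_nonneg g_nonneg
    by (subst (asm) ennreal_inj) (auto intro!: integral_nonneg)
  moreover have "(\<Sum>j. W j \<omega> * g (X j \<omega>)) = (\<Sum>j. W j \<omega> * f (X j \<omega>)) + B * (\<Sum>j. W j \<omega>)"
    unfolding g_def distrib_left
    using suminf_add[OF summable_Wf summable_mult2[OF summable_W, of B]] suminf_mult2[OF summable_W, of B]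
    by (simp add: ac_simps)
  ultimately show ?thesis
    using int_f m.prob_space p0.prob_space by (simp add: g_def c_def algebra_simps)
qed

end

definition stick_breaking :: "(nat \<Rightarrow> real) \<Rightarrow> nat \<Rightarrow> real" where
  "stick_breaking u j = u j * (\<Prod>i<j. 1 - u i)"

lemma sb_weight_eq_stick_breaking: "sb_weight v j \<omega> = stick_breaking (\<lambda>i. v i \<omega>) j"
  by (simp add: sb_weight_def stick_breaking_def)

lemma stick_breaking_partial_sum: "(\<Sum>j<n. stick_breaking u j) = 1 - (\<Prod>i<n. 1 - u i)"
  by (induction n) (auto simp: stick_breaking_def algebra_simps)

lemma abs_prod_diff_le_sum:
  fixes x y :: "nat \<Rightarrow> real"
  assumes "\<And>i. i < n \<Longrightarrow> x i \<in> {0..1}" and "\<And>i. i < n \<Longrightarrow> y i \<in> {0..1}"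
  shows "\<bar>(\<Prod>i<n. x i) - (\<Prod>i<n. y i)\<bar> \<le> (\<Sum>i<n. \<bar>x i - y i\<bar>)"
  using assms
proof (induction n)
  case 0
  then show ?case by simp
next
  case (Suc n)
  let ?X = "\<Prod>i<n. x i" and ?Y = "\<Prod>i<n. y i"
  have X: "0 \<le> ?X" and Y: "0 \<le> ?Y" "?Y \<le> 1"
    using Suc.prems by (auto intro!: prod_nonneg prod_le_1)
  have xy: "0 \<le> x n" "x n \<le> 1" "0 \<le> y n" "y n \<le> 1" using Suc.prems by auto
  have "\<bar>?X * x n - ?Y * y n\<bar> = \<bar>(?X - ?Y) * x n + ?Y * (x n - y n)\<bar>"
    by (simp add: algebra_simps)
  also have "\<dots> \<le> \<bar>?X - ?Y\<bar> * x n + ?Y * \<bar>x n - y n\<bar>"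
    using xy X Y by (simp add: abs_mult abs_triangle_ineq[THEN order_trans])
  also have "\<dots> \<le> \<bar>?X - ?Y\<bar> + \<bar>x n - y n\<bar>"
    using xy Y by (intro add_mono mult_left_le mult_left_le_one_le) auto
  finally show ?case using Suc by simp
qed

lemma abs_prod_one_minus_diff_power_le:
  fixes u :: "nat \<Rightarrow> real"
  assumes u: "\<And>i. i < N \<Longrightarrow> u i \<in> {a<..<a + d}" and "0 \<le> a" and "a + d \<le> 1"
  shows "\<bar>(\<Prod>i<N. 1 - u i) - (1 - a) ^ N\<bar> \<le> N * d"
proof -
  have "\<bar>(\<Prod>i<N. 1 - u i) - (\<Prod>i<N. 1 - a)\<bar> \<le> (\<Sum>i<N. \<bar>(1 - u i) - (1 - a)\<bar>)"
    using u assms(2,3) by (intro abs_prod_diff_le_sum) force+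
  also have "\<dots> \<le> (\<Sum>i<N. d)"
    using u by (intro sum_mono) (force simp: abs_le_iff)
  finally show ?thesis by simp
qed

context
  fixes u :: "nat \<Rightarrow> real"
  assumes u_01: "\<And>i. u i \<in> {0..1}"
begin

lemma prod_one_minus_bounds: "0 \<le> (\<Prod>i<n. 1 - u i) \<and> (\<Prod>i<n. 1 - u i) \<le> 1"
  using u_01 by (auto intro!: prod_nonneg prod_le_1)

lemma prod_one_minus_antimono: "m \<le> n \<Longrightarrow> (\<Prod>i<n. 1 - u i) \<le> (\<Prod>i<m. 1 - u i)"
proof (induction n rule: dec_induct)
  case (step n)
  have "(\<Prod>i<n. 1 - u i) * (1 - u n) \<le> (\<Prod>i<n. 1 - u i)"
    using prod_one_minus_bounds[of n] u_01[of n] by (intro mult_left_le) auto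
  with step show ?case by simp
qed simp

lemma stick_breaking_nonneg: "0 \<le> stick_breaking u j"
  unfolding stick_breaking_def using u_01 prod_one_minus_bounds by auto

lemma summable_stick_breaking: "summable (stick_breaking u)"
  by (rule summableI_nonneg_bounded[of _ 1])
     (use stick_breaking_nonneg stick_breaking_partial_sum prod_one_minus_bounds in auto)

lemma suminf_stick_breaking_le_1: "(\<Sum>j. stick_breaking u j) \<le> 1"
  by (rule suminf_le_const[OF summable_stick_breaking])
     (use stick_breaking_partial_sum prod_one_minus_bounds in auto)

lemma stick_breaking_remainder_le_prod: "1 - (\<Sum>j. stick_breaking u j) \<le> (\<Prod>i<N. 1 - u i)"
proof -
  have "(\<Sum>j<N. stick_breaking u j) \<le> (\<Sum>j. stick_breaking u j)"
    by (rule sum_le_suminf[OF summable_stick_breaking]) (auto simp: stick_breaking_nonneg)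
  then show ?thesis by (simp add: stick_breaking_partial_sum)
qed

lemma suminf_stick_breaking_shift:
  "(\<Sum>j. stick_breaking u (j + N)) = (\<Prod>i<N. 1 - u i) - (1 - (\<Sum>j. stick_breaking u j))"
  using suminf_split_initial_segment[OF summable_stick_breaking, of N] stick_breaking_partial_sum[of u N]
  by simp

text \<open>Every time a length exceeds d, the remaining stick shrinks by the factor 1 - d.\<close>
lemma suminf_stick_breaking_eq_1:
  assumes d: "0 < d" and frequently: "\<And>m. \<exists>i\<ge>m. d < u i"
  shows "(\<Sum>j. stick_breaking u j) = 1"
proof -
  have d_less_1: "d < 1" using frequently u_01 by (meson atLeastAtMost_iff order_less_le_trans)
  have "\<exists>n. (\<Prod>i<n. 1 - u i) \<le> (1 - d) ^ K" for K
  proof (induction K)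
    case 0
    then show ?case by (auto intro!: exI[of _ 0])
  next
    case (Suc K)
    then obtain n where n: "(\<Prod>i<n. 1 - u i) \<le> (1 - d) ^ K" by blast
    obtain k where k: "n \<le> k" "d < u k" using frequently by blast
    have "(\<Prod>i<Suc k. 1 - u i) = (\<Prod>i<k. 1 - u i) * (1 - u k)" by simp
    also have "\<dots> \<le> (1 - d) ^ K * (1 - d)"
      using prod_one_minus_antimono[OF k(1)] n u_01[of k] k(2) prod_one_minus_bounds[of k] d_less_1
      by (intro mult_mono) auto
    finally have "(\<Prod>i<Suc k. 1 - u i) \<le> (1 - d) ^ Suc K" by (simp add: mult.commute)
    then show ?case by blast
  qed
  then have "1 - (\<Sum>j. stick_breaking u j) \<le> (1 - d) ^ K" for K
    using stick_breaking_remainder_le_prod by (meson order_trans)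
  moreover have "(\<lambda>K. (1 - d) ^ K) \<longlonglongrightarrow> 0"
    using d d_less_1 by (intro LIMSEQ_power_zero) auto
  ultimately have "1 - (\<Sum>j. stick_breaking u j) \<le> 0"
    by (intro LIMSEQ_le_const) auto
  then show ?thesis using suminf_stick_breaking_le_1 by simp
qed

end

lemma stick_breaking_tail_bound:
  fixes u g :: "nat \<Rightarrow> real"
  assumes u_01: "\<And>i. u i \<in> {0..1}" and g_bound: "\<And>j. \<bar>g j\<bar> \<le> B" and I_bound: "\<bar>I\<bar> \<le> B"
  shows "\<bar>(\<Sum>j. stick_breaking u j * g j) + (1 - (\<Sum>j. stick_breaking u j)) * I
      - (\<Sum>j<N. stick_breaking u j * g j)\<bar> \<le> B * (\<Prod>i<N. 1 - u i)"
proof -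
  define w where "w = stick_breaking u"
  define c where "c = 1 - (\<Sum>j. w j)"
  have w_nonneg: "0 \<le> w j" for j unfolding w_def using u_01 by (rule stick_breaking_nonneg)
  have c_nonneg: "0 \<le> c" unfolding c_def w_def using u_01 by (simp add: suminf_stick_breaking_le_1)
  have summable_tail: "summable (\<lambda>j. w (j + N))"
    using summable_stick_breaking[of u, OF u_01] by (simp add: w_def summable_iff_shift)
  have summable_abs: "summable (\<lambda>j. norm (w (j + N) * g (j + N)))"
    using summable_mult_bounded[OF summable_tail, of "\<lambda>j. \<bar>g (j + N)\<bar>" B] w_nonneg g_bound
    by (simp add: abs_mult)
  have "(\<Sum>j. w j * g j) - (\<Sum>j<N. w j * g j) = (\<Sum>j. w (j + N) * g (j + N))"
    using suminf_split_initial_segment[of "\<lambda>j. w j * g j" N]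
      summable_mult_bounded[OF summable_stick_breaking[of u, OF u_01] stick_breaking_nonneg[of u, OF u_01] g_bound]
    by (simp add: w_def)
  moreover have "\<bar>\<Sum>j. w (j + N) * g (j + N)\<bar> \<le> (\<Sum>j. w (j + N) * B)"
  proof -
    have "\<bar>\<Sum>j. w (j + N) * g (j + N)\<bar> \<le> (\<Sum>j. norm (w (j + N) * g (j + N)))"
      using summable_norm[OF summable_abs] by simp
    also have "\<dots> \<le> (\<Sum>j. w (j + N) * B)"
      using summable_abs summable_mult2[OF summable_tail] w_nonneg g_bound
      by (intro suminf_le) (auto simp: abs_mult intro: mult_left_mono)
    finally show ?thesis .
  qed
  moreover have "(\<Sum>j. w (j + N) * B) = B * ((\<Prod>i<N. 1 - u i) - c)"
    using suminf_mult2[OF summable_tail, of B] suminf_stick_breaking_shift[of u N, OF u_01]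
    by (simp add: w_def c_def mult.commute)
  moreover have "\<bar>c * I\<bar> \<le> c * B" using c_nonneg I_bound by (simp add: abs_mult mult_left_mono)
  ultimately show ?thesis
    by (simp add: w_def[symmetric] c_def[symmetric] abs_le_iff algebra_simps)
qed

lemma sum_lessThan_blocks:
  fixes g :: "nat \<Rightarrow> 'a::comm_monoid_add"
  assumes "mono n" and "n 0 = 0"
  shows "(\<Sum>j<n L. g j) = (\<Sum>l<L. \<Sum>j\<in>{n l..<n (Suc l)}. g j)"
proof (induction L)
  case 0
  then show ?case using assms by simp
next
  case (Suc L)
  have "n L \<le> n (Suc L)" using assms(1) by (simp add: monoD)
  then have "(\<Sum>j<n (Suc L). g j) = (\<Sum>j<n L. g j) + (\<Sum>j\<in>{n L..<n (Suc L)}. g j)"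
    using sum.atLeastLessThan_concat[of 0 "n L" "n (Suc L)" g] by (simp add: atLeast0LessThan)
  then show ?case using Suc by simp
qed

definition block_of :: "(nat \<Rightarrow> nat) \<Rightarrow> nat \<Rightarrow> nat" where
  "block_of n j = (LEAST l. j < n (Suc l))"

lemma block_of_less:
  assumes "n 0 = 0" and "j < n L"
  shows "block_of n j < L"
proof -
  have "L \<noteq> 0" using assms by (metis less_nat_zero_code)
  then have "j < n (Suc (L - 1))" using assms by simp
  then have "block_of n j \<le> L - 1" unfolding block_of_def by (rule Least_le)
  with \<open>L \<noteq> 0\<close> show ?thesis by simp
qed

lemma block_of_eq:
  assumes "mono n" and "n l \<le> j" and "j < n (Suc l)"
  shows "block_of n j = l"
  unfolding block_of_def
proof (rule Least_equality)
  show "l \<le> l'" if "j < n (Suc l')" for l'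
  proof (rule ccontr)
    assume "\<not> l \<le> l'"
    then have "n (Suc l') \<le> n l" using assms(1) by (simp add: monoD)
    with that assms(2) show False by simp
  qed
qed (rule assms(3))

lemma sum_blocks_approx:
  fixes w g h p :: "nat \<Rightarrow> real"
  assumes "mono n" and "n 0 = 0" and w_nonneg: "\<And>j. 0 \<le> w j" and total: "(\<Sum>j<n L. w j) \<le> 1"
    and close: "\<And>l j. l < L \<Longrightarrow> j \<in> {n l..<n (Suc l)} \<Longrightarrow> \<bar>g j - h l\<bar> \<le> \<delta>"
    and weights: "\<And>l. l < L \<Longrightarrow> \<bar>(\<Sum>j\<in>{n l..<n (Suc l)}. w j) - p l\<bar> \<le> \<eta>"
    and h_bound: "\<And>l. \<bar>h l\<bar> \<le> B" and "0 \<le> \<delta>"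
  shows "\<bar>(\<Sum>j<n L. w j * g j) - (\<Sum>l<L. p l * h l)\<bar> \<le> \<delta> + \<eta> * B * L"
proof -
  define W where "W l = (\<Sum>j\<in>{n l..<n (Suc l)}. w j)" for l
  have within_block: "\<bar>(\<Sum>j\<in>{n l..<n (Suc l)}. w j * g j) - W l * h l\<bar> \<le> W l * \<delta>" if "l < L" for l
  proof -
    have "\<bar>(\<Sum>j\<in>{n l..<n (Suc l)}. w j * g j) - W l * h l\<bar>
        = \<bar>\<Sum>j\<in>{n l..<n (Suc l)}. w j * (g j - h l)\<bar>"
      by (simp add: W_def sum_distrib_right sum_subtractf right_diff_distrib)
    also have "\<dots> \<le> (\<Sum>j\<in>{n l..<n (Suc l)}. w j * \<delta>)"
      using close[OF that] w_nonneg
      by (intro order_trans[OF sum_abs] sum_mono) (auto simp: abs_mult intro: mult_left_mono)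
    finally show ?thesis by (simp add: W_def sum_distrib_right)
  qed
  have "\<bar>(\<Sum>j<n L. w j * g j) - (\<Sum>l<L. W l * h l)\<bar> \<le> (\<Sum>l<L. W l * \<delta>)"
    unfolding sum_lessThan_blocks[OF assms(1,2)] sum_subtractf[symmetric]
    using within_block by (intro order_trans[OF sum_abs] sum_mono) auto
  also have "\<dots> \<le> \<delta>"
    using total \<open>0 \<le> \<delta>\<close> sum_lessThan_blocks[OF assms(1,2), of w L]
    by (simp add: W_def sum_distrib_right[symmetric] mult_left_le_one_le sum_nonneg w_nonneg)
  finally have blocks: "\<bar>(\<Sum>j<n L. w j * g j) - (\<Sum>l<L. W l * h l)\<bar> \<le> \<delta>" .
  have "\<bar>(\<Sum>l<L. W l * h l) - (\<Sum>l<L. p l * h l)\<bar> \<le> (\<Sum>l<L. \<eta> * B)"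
    unfolding sum_subtractf[symmetric] left_diff_distrib[symmetric]
    using weights h_bound
    by (intro order_trans[OF sum_abs] sum_mono) (auto simp: W_def abs_mult intro!: mult_mono')
  with blocks show ?thesis by (simp add: ac_simps)
qed

lemma stick_breaking_mixture_approx:
  fixes u g h p :: "nat \<Rightarrow> real"
  assumes u_01: "\<And>i. u i \<in> {0..1}" and "mono n" and "n 0 = 0"
    and prod_approx: "\<And>l. l \<le> L \<Longrightarrow> \<bar>(\<Prod>i<n l. 1 - u i) - (1 - (\<Sum>k<l. p k))\<bar> \<le> \<eta>"
    and p_sum: "(\<Sum>l<L. p l) = 1"
    and g_bound: "\<And>j. \<bar>g j\<bar> \<le> B" and h_bound: "\<And>l. \<bar>h l\<bar> \<le> B" and I_bound: "\<bar>I\<bar> \<le> B"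
    and close: "\<And>l j. l < L \<Longrightarrow> j \<in> {n l..<n (Suc l)} \<Longrightarrow> \<bar>g j - h l\<bar> \<le> \<delta>" and "0 \<le> \<delta>"
  shows "\<bar>(\<Sum>j. stick_breaking u j * g j) + (1 - (\<Sum>j. stick_breaking u j)) * I
      - (\<Sum>l<L. p l * h l)\<bar> \<le> B * \<eta> + \<delta> + 2 * \<eta> * B * L"
proof -
  define Pr where "Pr k = (\<Prod>i<k. 1 - u i)" for k
  have "0 \<le> B" using g_bound[of 0] by linarith
  then have "B * Pr (n L) \<le> B * \<eta>"
    using prod_approx[of L] p_sum by (intro mult_left_mono) (auto simp: Pr_def)
  then have tail: "\<bar>(\<Sum>j. stick_breaking u j * g j) + (1 - (\<Sum>j. stick_breaking u j)) * I
      - (\<Sum>j<n L. stick_breaking u j * g j)\<bar> \<le> B * \<eta>"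
    using stick_breaking_tail_bound[of u g B I "n L", OF u_01 g_bound I_bound] by (simp add: Pr_def)
  have block_weight: "(\<Sum>j\<in>{n l..<n (Suc l)}. stick_breaking u j) = Pr (n l) - Pr (n (Suc l))" for l
    using sum_diff_nat_ivl[of 0 "n l" "n (Suc l)" "stick_breaking u"] monoD[OF \<open>mono n\<close>, of l "Suc l"]
    by (simp add: Pr_def atLeast0LessThan stick_breaking_partial_sum)
  have "\<bar>(\<Sum>j\<in>{n l..<n (Suc l)}. stick_breaking u j) - p l\<bar> \<le> 2 * \<eta>" if "l < L" for l
    using prod_approx[of l] prod_approx[of "Suc l"] that
    unfolding block_weight by (simp add: Pr_def abs_le_iff)
  then have blocks: "\<bar>(\<Sum>j<n L. stick_breaking u j * g j) - (\<Sum>l<L. p l * h l)\<bar> \<le> \<delta> + 2 * \<eta> * B * L"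
    using assms(2,3) stick_breaking_nonneg[of u, OF u_01] close h_bound \<open>0 \<le> \<delta>\<close>
      stick_breaking_partial_sum[of u "n L"] prod_one_minus_bounds[of u "n L", OF u_01]
    by (intro sum_blocks_approx) auto
  from tail blocks show ?thesis by linarith
qed

context
  fixes q e :: real
  assumes q: "0 \<le> q" "q < 1" and e: "0 < e"
begin

lemma power_Least_le: "q ^ (LEAST n. q ^ n \<le> max t e) \<le> max t e"
proof (rule LeastI_ex)
  obtain n where "q ^ n < e" using real_arch_pow_inv[OF e q(2)] by blast
  then show "\<exists>n. q ^ n \<le> max t e" by (auto intro: less_imp_le max.coboundedI2)
qed

lemma Least_power_antimono:
  assumes "t \<le> t'"
  shows "(LEAST n. q ^ n \<le> max t' e) \<le> (LEAST n. q ^ n \<le> max t e)"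
  using power_Least_le[of t] assms by (intro Least_le) (meson max.mono order_refl order_trans)

text \<open>Since consecutive powers of q differ by at most 1 - q, the first power below max t e
  lies within 1 - q of it.\<close>
lemma abs_power_Least_diff_le:
  assumes "1 - q \<le> e" and t: "t \<in> {0..1}"
  shows "\<bar>q ^ (LEAST n. q ^ n \<le> max t e) - t\<bar> \<le> e"
proof (cases "LEAST n. q ^ n \<le> max t e")
  case 0
  then have "1 \<le> max t e" using power_Least_le[of t] by simp
  then show ?thesis using 0 t e by (auto simp: max_def split: if_splits)
next
  case (Suc s)
  then have "\<not> q ^ s \<le> max t e" using not_less_Least[of s "\<lambda>n. q ^ n \<le> max t e"] by simp
  moreover have "q ^ s * (1 - q) \<le> 1 - q"
    using q by (intro mult_left_le_one_le) (auto simp: power_le_one)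
  then have "q ^ s - (1 - q) \<le> q ^ Suc s" by (simp add: algebra_simps)
  ultimately have "max t e - (1 - q) < q ^ Suc s" by linarith
  moreover have "q ^ Suc s \<le> max t e" using power_Least_le[of t] Suc by simp
  moreover have "0 \<le> q ^ Suc s" using q by simp
  ultimately show ?thesis using assms Suc by (simp add: abs_le_iff max_def split: if_splits)
qed

end

text \<open>Lengths all close to a make the remaining stick after n steps about (1 - a)^n; the block
  ends n l are chosen so that this matches the mass 1 - (p 0 + ... + p (l - 1)) still to be placed.\<close>
lemma exists_block_schedule:
  fixes p :: "nat \<Rightarrow> real" and L :: nat
  assumes p_nonneg: "\<And>l. l < L \<Longrightarrow> 0 \<le> p l" and p_sum: "(\<Sum>l<L. p l) = 1"
    and \<eta>: "0 < \<eta>" and \<epsilon>: "0 < \<epsilon>"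
  obtains a b and n :: "nat \<Rightarrow> nat" where "0 < a" "a < b" "b < \<epsilon>" "n 0 = 0" "mono n"
    "\<And>u l. (\<And>i. i < n L \<Longrightarrow> u i \<in> {a<..<b}) \<Longrightarrow> l \<le> L \<Longrightarrow>
       \<bar>(\<Prod>i<n l. 1 - u i) - (1 - (\<Sum>k<l. p k))\<bar> \<le> \<eta>"
proof -
  define e where "e = min \<epsilon> 1"
  have e: "0 < e" "e \<le> \<epsilon>" "e \<le> 1" using \<epsilon> by (auto simp: e_def)
  define a where "a = min e \<eta> / 4"
  have a: "0 < a" "a \<le> \<eta> / 4" "a \<le> e / 4" using e \<eta> by (auto simp: a_def)
  define q where "q = 1 - a"
  have q: "0 \<le> q" "q < 1" "1 - q \<le> \<eta> / 2" using a e by (auto simp: q_def)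
  define t where "t l = 1 - (\<Sum>k<min l L. p k)" for l
  have t_01: "t l \<in> {0..1}" for l
    using sum_mono2[of "{..<L}" "{..<min l L}" p] p_nonneg p_sum
    by (auto simp: t_def intro!: sum_nonneg)
  have t_antimono: "t l' \<le> t l" if "l \<le> l'" for l l'
    using that p_nonneg by (auto simp: t_def intro!: sum_mono2)
  define n where "n l = (LEAST m. q ^ m \<le> max (t l) (\<eta> / 2))" for l
  have "n 0 = 0" by (simp add: n_def t_def)
  have "mono n"
    using Least_power_antimono[OF q(1,2)] \<eta> t_antimono by (auto simp: n_def intro!: monoI)
  have power_approx: "\<bar>q ^ n l - t l\<bar> \<le> \<eta> / 2" for l
    unfolding n_def using q \<eta> t_01 by (intro abs_power_Least_diff_le) auto
  define d where "d = min (\<eta> / (2 * (real (n L) + 1))) (e / 2)"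
  have d: "0 < d" "a + d < e" "real (n L) * d \<le> \<eta> / 2"
  proof -
    show "0 < d" "a + d < e" using \<eta> a e by (auto simp: d_def)
    have "real (n L) * d \<le> real (n L) * (\<eta> / (2 * (real (n L) + 1)))"
      unfolding d_def by (intro mult_left_mono) auto
    also have "\<dots> \<le> \<eta> / 2" using \<eta> by (simp add: field_simps)
    finally show "real (n L) * d \<le> \<eta> / 2" .
  qed
  have "\<bar>(\<Prod>i<n l. 1 - u i) - (1 - (\<Sum>k<l. p k))\<bar> \<le> \<eta>"
    if u: "\<And>i. i < n L \<Longrightarrow> u i \<in> {a<..<a + d}" and "l \<le> L" for u l
  proof -
    have "n l \<le> n L" using \<open>mono n\<close> \<open>l \<le> L\<close> by (simp add: monoD)
    then have "\<bar>(\<Prod>i<n l. 1 - u i) - q ^ n l\<bar> \<le> real (n l) * d"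
      unfolding q_def using u a d e by (intro abs_prod_one_minus_diff_power_le) auto
    also have "\<dots> \<le> \<eta> / 2"
      using \<open>n l \<le> n L\<close> d by (meson mult_right_mono of_nat_le_iff order_trans less_imp_le)
    finally have "\<bar>(\<Prod>i<n l. 1 - u i) - q ^ n l\<bar> \<le> \<eta> / 2" .
    moreover have "\<bar>q ^ n l - (1 - (\<Sum>k<l. p k))\<bar> \<le> \<eta> / 2"
      using power_approx[of l] \<open>l \<le> L\<close> by (simp add: t_def)
    ultimately show ?thesis by linarith
  qed
  with a d e \<open>n 0 = 0\<close> \<open>mono n\<close> show ?thesis
    by (intro that[of a "a + d" n]) auto
qed

lemma Int_msupport_nonempty:
  fixes P :: "'a::second_countable_topology measure"
  assumes sets_P: "sets P = sets borel" and C: "C \<in> sets borel" and pos: "0 < emeasure P C"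
  shows "C \<inter> msupport P \<noteq> {}"
proof
  assume empty: "C \<inter> msupport P = {}"
  obtain \<B> :: "'a set set" where "countable \<B>" and basis: "topological_basis \<B>"
    using ex_countable_basis by blast
  have open_\<B>: "b \<in> \<B> \<Longrightarrow> open b" for b using basis topological_basis_open by blast
  define Z where "Z = (\<Union>b\<in>{b \<in> \<B>. emeasure P b = 0}. b)"
  have "Z \<in> null_sets P"
    unfolding Z_def using \<open>countable \<B>\<close> open_\<B> sets_P by (intro null_sets_UN') (auto simp: null_sets_def)
  moreover have "C \<subseteq> Z"
  proof
    fix x assume "x \<in> C"
    then have "x \<notin> msupport P" using empty by auto
    then obtain U where U: "open U" "x \<in> U" "emeasure P U = 0"
      unfolding msupport_def by (auto simp: not_gr_zero)
    obtain b where b: "b \<in> \<B>" "x \<in> b" "b \<subseteq> U"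
      using topological_basisE[OF basis U(1,2)] by blast
    have "emeasure P b \<le> emeasure P U"
      using b U sets_P open_\<B> by (intro emeasure_mono) auto
    with U have "emeasure P b = 0" by simp
    with b show "x \<in> Z" unfolding Z_def by blast
  qed
  ultimately have "C \<in> null_sets P" using C sets_P by (blast intro: null_sets_subset)
  with pos show False by (simp add: null_sets_def)
qed

lemma borel_measurable_bounded_continuous:
  "bounded_continuous f \<Longrightarrow> f \<in> borel_measurable borel"
  by (auto simp: bounded_continuous_def intro: borel_measurable_continuous_onI)

lemma bounded_continuous_list_bound:
  assumes "\<forall>f\<in>set fs. bounded_continuous f"
  obtains B where "1 \<le> B" "\<And>f y. f \<in> set fs \<Longrightarrow> \<bar>f y\<bar> \<le> B"
proof -
  have "\<forall>f\<in>set fs. \<exists>b. \<forall>y. \<bar>f y\<bar> \<le> b"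
    using assms by (auto simp: bounded_continuous_def bounded_iff)
  then obtain b where b: "\<And>f y. f \<in> set fs \<Longrightarrow> \<bar>f y\<bar> \<le> b f" by metis
  show ?thesis
  proof (rule that)
    show "1 \<le> Max (insert 1 (b ` set fs))" by simp
    show "\<bar>f y\<bar> \<le> Max (insert 1 (b ` set fs))" if "f \<in> set fs" for f y
      using b[OF that, of y] that by (intro order_trans[OF _ Max_ge]) auto
  qed
qed

lemma open_Inter_near:
  assumes "\<forall>f\<in>set fs. bounded_continuous f"
  shows "open (\<Inter>f\<in>set fs. {y. \<bar>f y - f x\<bar> < \<delta>})"
proof (intro open_INT ballI finite_set)
  fix f assume "f \<in> set fs"
  then have "continuous_on UNIV f" using assms by (simp add: bounded_continuous_def)
  then show "open {y. \<bar>f y - f x\<bar> < \<delta>}" by (intro open_Collect_less continuous_intros)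
qed

lemma exists_fine_borel_partition:
  fixes fs :: "('a::topological_space \<Rightarrow> real) list"
  assumes borel: "\<And>f. f \<in> set fs \<Longrightarrow> f \<in> borel_measurable borel"
    and bound: "\<And>f y. f \<in> set fs \<Longrightarrow> \<bar>f y\<bar> \<le> B" and \<delta>: "0 < \<delta>"
  shows "\<exists>K :: 'a \<Rightarrow> int list. finite (range K) \<and> (\<forall>k. K -` {k} \<in> sets borel) \<and>
    (\<forall>f\<in>set fs. \<forall>y z. K y = K z \<longrightarrow> \<bar>f y - f z\<bar> < \<delta>)"
proof -
  define K where "K y = map (\<lambda>f. \<lfloor>f y / \<delta>\<rfloor>) fs" for y
  define R where "R = \<lceil>B / \<delta>\<rceil>"
  have "set (K y) \<subseteq> {-R..R}" for y
  proof
    fix k assume "k \<in> set (K y)"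
    then obtain f where f: "f \<in> set fs" "k = \<lfloor>f y / \<delta>\<rfloor>" unfolding K_def by auto
    have "\<bar>f y / \<delta>\<bar> \<le> B / \<delta>" using bound[OF f(1)] \<delta> by (simp add: abs_divide divide_right_mono)
    also have "\<dots> \<le> of_int R" by (simp add: R_def)
    finally have "\<bar>f y / \<delta>\<bar> \<le> of_int R" .
    then have "f y / \<delta> \<le> of_int R" "- (f y / \<delta>) \<le> of_int R"
      by (rule abs_le_D1, rule abs_le_D2)
    then show "k \<in> {-R..R}"
      unfolding f(2) by (auto simp: le_floor_iff floor_le_iff)
  qed
  moreover have "length (K y) = length fs" for y by (simp add: K_def)
  ultimately have "range K \<subseteq> {ks. set ks \<subseteq> {-R..R} \<and> length ks = length fs}"
    by blast
  then have "finite (range K)"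
    by (rule finite_subset) (intro finite_lists_length_eq finite_atLeastAtMost_int)
  moreover have "K -` {k} \<in> sets borel" for k
    unfolding K_def vimage_def using borel
  proof (induction fs arbitrary: k)
    case (Cons g gs)
    have [measurable]: "g \<in> borel_measurable borel" using Cons.prems by simp
    have "{y. \<lfloor>g y / \<delta>\<rfloor> = a} \<in> sets borel" for a
      by (simp add: floor_eq_iff)
    with Cons show ?case by (cases k) (auto simp: Collect_conj_eq)
  qed (cases k, auto)
  moreover have "\<bar>f y - f z\<bar> < \<delta>" if "f \<in> set fs" "K y = K z" for f y z
  proof -
    have "\<lfloor>f y / \<delta>\<rfloor> = \<lfloor>f z / \<delta>\<rfloor>" using that by (auto simp: K_def)
    then have "\<bar>f y / \<delta> - f z / \<delta>\<bar> < 1" by linarith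
    with \<delta> show ?thesis by (simp add: diff_divide_distrib[symmetric] abs_divide)
  qed
  ultimately show ?thesis by blast
qed

lemma integral_approx_on_partition:
  fixes f :: "'a::topological_space \<Rightarrow> real" and K :: "'a \<Rightarrow> 'k"
  assumes P: "prob_space P" "sets P = sets borel"
    and K: "finite (range K)" "\<And>k. K -` {k} \<in> sets borel"
    and f: "f \<in> borel_measurable borel" "\<And>y. \<bar>f y\<bar> \<le> B"
    and oscillation: "\<And>y z. K y = K z \<Longrightarrow> \<bar>f y - f z\<bar> \<le> \<delta>"
    and r: "\<And>k. k \<in> range K \<Longrightarrow> K (r k) = k"
  shows "\<bar>(\<integral>y. f y \<partial>P) - (\<Sum>k\<in>range K. measure P (K -` {k}) * f (r k))\<bar> \<le> \<delta>"
proof -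
  interpret prob_space P by (rule P(1))
  have int_f: "integrable P f"
    using f P(2) by (intro integrable_const_bound[of _ B]) (auto simp: measurable_cong_sets[OF P(2) refl])
  define h where "h y = (\<Sum>k\<in>range K. f (r k) * indicator (K -` {k}) y)" for y
  have h_eq: "h y = f (r (K y))" for y
  proof -
    have "h y = (\<Sum>k\<in>range K. if K y = k then f (r k) else 0)"
      unfolding h_def by (rule sum.cong) (auto simp: indicator_def)
    also have "\<dots> = f (r (K y))" using K(1) by (simp add: sum.delta)
    finally show ?thesis .
  qed
  have int_cell: "integrable P (\<lambda>y. f (r k) * indicator (K -` {k}) y)" for k
    using K(2) P(2) by (intro integrable_mult_right) (simp add: emeasure_eq_measure)
  then have int_h: "integrable P h" unfolding h_def by auto
  have "(\<integral>y. h y \<partial>P) = (\<Sum>k\<in>range K. measure P (K -` {k}) * f (r k))"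
    unfolding h_def using int_cell K(2) P(2) by (simp add: mult.commute)
  moreover have "\<bar>(\<integral>y. f y \<partial>P) - (\<integral>y. h y \<partial>P)\<bar> \<le> \<delta>"
  proof -
    have "\<bar>(\<integral>y. f y \<partial>P) - (\<integral>y. h y \<partial>P)\<bar> \<le> (\<integral>y. \<bar>f y - h y\<bar> \<partial>P)"
      using int_f int_h integral_norm_bound[of P "\<lambda>y. f y - h y"] by simp
    also have "\<dots> \<le> (\<integral>y. \<delta> \<partial>P)"
    proof (intro integral_mono)
      show "\<bar>f y - h y\<bar> \<le> \<delta>" for y
        using oscillation[of y "r (K y)"] r[of "K y"] by (simp add: h_eq)
    qed (use int_f int_h in auto)
    finally show ?thesis using prob_space by simp
  qed
  ultimately show ?thesis by simp
qed

lemma exists_cell_representatives: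
  fixes P :: "'a::second_countable_topology measure" and K :: "'a \<Rightarrow> 'k"
  assumes sets_P: "sets P = sets borel" and cells: "\<And>k. K -` {k} \<in> sets borel"
  obtains r where "\<And>k. k \<in> range K \<Longrightarrow> K (r k) = k"
    "\<And>k. 0 < emeasure P (K -` {k}) \<Longrightarrow> r k \<in> msupport P"
proof -
  have "\<exists>y. K y = k \<and> (0 < emeasure P (K -` {k}) \<longrightarrow> y \<in> msupport P)" if "k \<in> range K" for k
  proof (cases "0 < emeasure P (K -` {k})")
    case True
    with sets_P cells have "K -` {k} \<inter> msupport P \<noteq> {}" by (rule Int_msupport_nonempty)
    then show ?thesis by auto
  qed (use that in auto)
  then obtain r where r: "\<And>k. k \<in> range K \<Longrightarrow> K (r k) = k \<and> (0 < emeasure P (K -` {k}) \<longrightarrow> r k \<in> msupport P)"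
    by metis
  moreover have "k \<in> range K" if "0 < emeasure P (K -` {k})" for k
    using that by (cases "K -` {k} = {}") auto
  ultimately show ?thesis using that by blast
qed

lemma exists_discrete_approx:
  fixes P :: "'a::polish_space measure" and fs :: "('a \<Rightarrow> real) list"
  assumes P: "P \<in> borel_probs" and fs: "\<forall>f\<in>set fs. bounded_continuous f" and \<delta>: "0 < \<delta>"
  obtains L :: nat and x :: "nat \<Rightarrow> 'a" and p :: "nat \<Rightarrow> real"
  where "\<And>l. l < L \<Longrightarrow> x l \<in> msupport P" "\<And>l. l < L \<Longrightarrow> 0 \<le> p l" "(\<Sum>l<L. p l) = 1"
    "\<And>f. f \<in> set fs \<Longrightarrow> \<bar>(\<integral>y. f y \<partial>P) - (\<Sum>l<L. p l * f (x l))\<bar> \<le> \<delta>"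
proof -
  have P_prob: "prob_space P" and sets_P: "sets P = sets borel" using P by (auto simp: borel_probs_def)
  interpret prob_space P by (rule P_prob)
  obtain B where B: "\<And>f y. f \<in> set fs \<Longrightarrow> \<bar>f y\<bar> \<le> B"
    using bounded_continuous_list_bound[OF fs] by blast
  have borel_fs: "\<And>f. f \<in> set fs \<Longrightarrow> f \<in> borel_measurable borel"
    using fs borel_measurable_bounded_continuous by blast
  have "\<exists>K :: 'a \<Rightarrow> int list. finite (range K) \<and> (\<forall>k. K -` {k} \<in> sets borel) \<and>
      (\<forall>f\<in>set fs. \<forall>y z. K y = K z \<longrightarrow> \<bar>f y - f z\<bar> < \<delta>)"
    using borel_fs B \<delta> by (rule exists_fine_borel_partition)
  then obtain K :: "'a \<Rightarrow> int list" where K: "finite (range K)" "\<And>k. K -` {k} \<in> sets borel"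
    and oscillation: "\<And>f y z. f \<in> set fs \<Longrightarrow> K y = K z \<Longrightarrow> \<bar>f y - f z\<bar> < \<delta>"
    by blast
  obtain r where r: "\<And>k. k \<in> range K \<Longrightarrow> K (r k) = k"
    and r_support: "\<And>k. 0 < emeasure P (K -` {k}) \<Longrightarrow> r k \<in> msupport P"
    using exists_cell_representatives[OF sets_P K(2)] by blast
  define pos where "pos = {k \<in> range K. 0 < measure P (K -` {k})}"
  have "finite pos" using K(1) by (simp add: pos_def)
  then obtain enum where enum: "bij_betw enum {..<card pos} pos"
    using ex_bij_betw_nat_finite[of pos] by (auto simp: atLeast0LessThan)
  have sum_pos: "(\<Sum>k\<in>range K. measure P (K -` {k}) * g k) = (\<Sum>l<card pos. measure P (K -` {enum l}) * g (enum l))"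
    for g :: "int list \<Rightarrow> real"
  proof -
    have "(\<Sum>k\<in>range K. measure P (K -` {k}) * g k) = (\<Sum>k\<in>pos. measure P (K -` {k}) * g k)"
      using K(1) by (intro sum.mono_neutral_right) (auto simp: pos_def zero_less_measure_iff)
    also have "\<dots> = (\<Sum>l<card pos. measure P (K -` {enum l}) * g (enum l))"
      using sum.reindex_bij_betw[OF enum, of "\<lambda>k. measure P (K -` {k}) * g k"] by simp
    finally show ?thesis .
  qed
  show ?thesis
  proof (rule that[of "card pos" "\<lambda>l. r (enum l)" "\<lambda>l. measure P (K -` {enum l})"])
    show "r (enum l) \<in> msupport P" if "l < card pos" for l
      using that enum r_support by (auto simp: bij_betw_def pos_def emeasure_eq_measure)
    show "0 \<le> measure P (K -` {enum l})" for l by simp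
    have "(\<Sum>k\<in>range K. measure P (K -` {k})) = measure P (\<Union>k\<in>range K. K -` {k})"
      using K sets_P by (intro finite_measure_finite_Union[symmetric]) (auto simp: disjoint_family_on_def)
    also have "(\<Union>k\<in>range K. K -` {k}) = space P" using sets_eq_imp_space_eq[OF sets_P] by auto
    also have "measure P (space P) = 1" by (rule prob_space)
    finally show "(\<Sum>l<card pos. measure P (K -` {enum l})) = 1"
      using sum_pos[of "\<lambda>_. 1"] by simp
    show "\<bar>(\<integral>y. f y \<partial>P) - (\<Sum>l<card pos. measure P (K -` {enum l}) * f (r (enum l)))\<bar> \<le> \<delta>"
      if f: "f \<in> set fs" for f
    proof -
      have "\<bar>(\<integral>y. f y \<partial>P) - (\<Sum>k\<in>range K. measure P (K -` {k}) * f (r k))\<bar> \<le> \<delta>"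
      proof (rule integral_approx_on_partition[OF P_prob sets_P K])
        show "f \<in> borel_measurable borel" using borel_fs f .
        show "\<bar>f y\<bar> \<le> B" for y using B f .
        show "\<bar>f y - f z\<bar> \<le> \<delta>" if "K y = K z" for y z using oscillation[OF f that] by simp
      qed (rule r)
      then show ?thesis using sum_pos[of "\<lambda>k. f (r k)"] by simp
    qed
  qed
qed

lemma exists_bump_function:
  fixes x :: "'a::metric_space"
  assumes "open U" and "x \<in> U"
  obtains f where "bounded_continuous f" "\<And>y. f y \<in> {0..1}" "f x = 1" "\<And>y. y \<notin> U \<Longrightarrow> f y = 0"
proof -
  obtain r where r: "0 < r" "ball x r \<subseteq> U" using assms open_contains_ball by blast
  define f where "f y = max 0 (1 - dist y x / r)" for y
  have f_01: "f y \<in> {0..1}" for y using r by (auto simp: f_def)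
  have "continuous_on UNIV f" unfolding f_def using r by (intro continuous_intros) auto
  moreover have "bounded (range f)"
    using f_01 by (intro bounded_subset[OF bounded_closed_interval[of 0 1]]) auto
  moreover have "f y = 0" if "y \<notin> U" for y
  proof -
    have "r \<le> dist y x" using that r by (auto simp: dist_commute not_less)
    with r show ?thesis by (simp add: f_def)
  qed
  ultimately show ?thesis using f_01 by (intro that[of f]) (auto simp: bounded_continuous_def f_def)
qed

lemma integral_pos_at_msupport:
  assumes P: "P \<in> borel_probs" and f: "bounded_continuous f" "\<And>y. 0 \<le> f y"
    and x: "x \<in> msupport P" "0 < f x"
  shows "0 < (\<integral>y. f y \<partial>P)"
proof -
  interpret prob_space P using P by (simp add: borel_probs_def)
  have sets_P: "sets P = sets borel" using P by (simp add: borel_probs_def)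
  obtain B where B: "\<And>y. \<bar>f y\<bar> \<le> B"
    using f(1) by (auto simp: bounded_continuous_def bounded_iff)
  define V where "V = {y. f x / 2 < f y}"
  have "open V"
    using f(1) unfolding V_def bounded_continuous_def by (intro open_Collect_less continuous_intros) auto
  with x have "0 < emeasure P V" unfolding msupport_def V_def by auto
  then have V_pos: "0 < measure P V" by (simp add: emeasure_eq_measure)
  have V_sets: "V \<in> sets P" using \<open>open V\<close> sets_P by simp
  have int_f: "integrable P f"
    using f(1) B sets_P borel_measurable_bounded_continuous
    by (intro integrable_const_bound[of _ B]) (auto simp: measurable_cong_sets[OF sets_P refl])
  have int_V: "integrable P (\<lambda>y. f x / 2 * indicator V y)"
    using V_sets by (simp add: emeasure_eq_measure)
  have "(\<integral>y. f x / 2 * indicator V y \<partial>P) \<le> (\<integral>y. f y \<partial>P)"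
  proof (rule integral_mono[OF int_V int_f])
    show "f x / 2 * indicator V y \<le> f y" for y
      using f(2)[of y] by (auto simp: V_def indicator_def)
  qed
  moreover have "(\<integral>y. f x / 2 * indicator V y \<partial>P) = f x / 2 * measure P V"
    using V_sets by (simp add: emeasure_eq_measure)
  moreover have "0 < f x / 2 * measure P V" using V_pos x(2) by simp
  ultimately show ?thesis by linarith
qed

locale esb =
  fixes M :: "'b measure"
    and \<mu>0 :: "'a::polish_space measure"
    and v :: "nat \<Rightarrow> 'b \<Rightarrow> real"
    and \<xi> :: "nat \<Rightarrow> 'b \<Rightarrow> 'a"
    and \<nu> :: "'b \<Rightarrow> real measure"
  assumes M: "prob_space M"
    and mu0_prob: "prob_space \<mu>0" and mu0_sets: "sets \<mu>0 = sets borel"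
    and v_rv[measurable]: "\<And>i. v i \<in> borel_measurable M"
    and v_01: "\<And>i \<omega>. \<omega> \<in> space M \<Longrightarrow> v i \<omega> \<in> {0..1}"
    and nu_rpm: "random_prob_01 M \<nu>"
    and nu_directs: "directs M \<nu> v"
    and xi_indep: "prob_space.indep_vars M (\<lambda>_. borel) \<xi> UNIV"
    and xi_law: "\<And>i. distr M borel (\<xi> i) = \<mu>0"
    and xi_v_indep: "distr M (PiM UNIV (\<lambda>_. borel) \<Otimes>\<^sub>M PiM UNIV (\<lambda>_. borel))
                       (\<lambda>\<omega>. (\<lambda>i. \<xi> i \<omega>, \<lambda>i. v i \<omega>))
                     = distr M (PiM UNIV (\<lambda>_. borel)) (\<lambda>\<omega> i. \<xi> i \<omega>)
                       \<Otimes>\<^sub>M distr M (PiM UNIV (\<lambda>_. borel)) (\<lambda>\<omega> i. v i \<omega>)"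
begin

sublocale prob_space M by (rule M)

lemma prob_space_nu: "\<omega> \<in> space M \<Longrightarrow> prob_space (\<nu> \<omega>)"
  using nu_rpm by (simp add: random_prob_01_def)

lemma sets_nu: "\<omega> \<in> space M \<Longrightarrow> sets (\<nu> \<omega>) = sets borel"
  using nu_rpm by (simp add: random_prob_01_def)

lemma space_nu: "\<omega> \<in> space M \<Longrightarrow> space (\<nu> \<omega>) = UNIV"
  using sets_eq_imp_space_eq[OF sets_nu] by simp

lemma borel_measurable_nu[measurable]: "C \<in> sets borel \<Longrightarrow> (\<lambda>\<omega>. measure (\<nu> \<omega>) C) \<in> borel_measurable M"
  using nu_rpm by (simp add: random_prob_01_def)

lemma vimage_nu_in_sigma_of_rm:
  "C \<in> sets borel \<Longrightarrow> D \<in> sets borel \<Longrightarrow> (\<lambda>\<omega>. measure (\<nu> \<omega>) C) -` D \<inter> space M \<in> sigma_of_rm M \<nu>"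
  unfolding sigma_of_rm_def by (intro sigma_sets.Basic) blast

lemma sigma_of_rm_subset: "sigma_of_rm M \<nu> \<subseteq> sets M"
  unfolding sigma_of_rm_def
  by (rule sets.sigma_sets_subset) (auto intro: measurable_sets[OF borel_measurable_nu])

lemma directsD:
  assumes "\<And>i. B i \<in> sets borel" and "A \<in> sigma_of_rm M \<nu>"
  shows "measure M (A \<inter> {\<omega> \<in> space M. \<forall>i<n. v i \<omega> \<in> B i})
    = (\<integral>\<omega>. indicator A \<omega> * (\<Prod>i<n. measure (\<nu> \<omega>) (B i)) \<partial>M)"
  using nu_directs assms unfolding directs_def by blast

lemma measure_v_in_le:
  assumes B: "\<And>i. B i \<in> sets borel" and A: "A \<in> sigma_of_rm M \<nu>"
    and bound: "\<And>\<omega>. \<omega> \<in> A \<Longrightarrow> (\<Prod>i<n. measure (\<nu> \<omega>) (B i)) \<le> r" and "0 \<le> r"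
  shows "measure M (A \<inter> {\<omega> \<in> space M. \<forall>i<n. v i \<omega> \<in> B i}) \<le> r"
proof -
  have "A \<in> sets M" using A sigma_of_rm_subset by blast
  have prod_01: "0 \<le> (\<Prod>i<n. measure (\<nu> \<omega>) (B i)) \<and> (\<Prod>i<n. measure (\<nu> \<omega>) (B i)) \<le> 1"
    if "\<omega> \<in> space M" for \<omega>
    using prob_space.prob_le_1[OF prob_space_nu[OF that]] by (auto intro: prod_nonneg prod_le_1)
  have "integrable M (\<lambda>\<omega>. indicator A \<omega> * (\<Prod>i<n. measure (\<nu> \<omega>) (B i)))"
    using prod_01 B \<open>A \<in> sets M\<close>
    by (intro integrable_const_bound[of _ 1]) (auto simp: indicator_def)
  then have "(\<integral>\<omega>. indicator A \<omega> * (\<Prod>i<n. measure (\<nu> \<omega>) (B i)) \<partial>M) \<le> (\<integral>\<omega>. r \<partial>M)"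
    using bound \<open>0 \<le> r\<close> by (intro integral_mono) (auto simp: indicator_def)
  then show ?thesis using directsD[OF B A] prob_space by simp
qed

lemma AE_v_in_if_nu_eq_1:
  assumes A: "A \<in> sigma_of_rm M \<nu>" and B: "B \<in> sets borel"
    and nu_B: "\<And>\<omega>. \<omega> \<in> A \<Longrightarrow> measure (\<nu> \<omega>) B = 1"
  shows "AE \<omega> in M. \<omega> \<in> A \<longrightarrow> v i \<omega> \<in> B"
proof -
  have "A \<in> sets M" using A sigma_of_rm_subset by blast
  define E where "E = {\<omega> \<in> space M. \<forall>j<Suc i. v j \<omega> \<in> B}"
  have "E \<in> sets M" using B unfolding E_def by measurable
  have "measure M (A \<inter> E) = (\<integral>\<omega>. indicator A \<omega> \<partial>M)"
    unfolding E_def directsD[OF B A]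
    by (rule Bochner_Integration.integral_cong) (auto simp: nu_B indicator_def)
  then have "measure M (A - A \<inter> E) = 0"
    using \<open>A \<in> sets M\<close> \<open>E \<in> sets M\<close> by (simp add: finite_measure_Diff)
  then have "A - A \<inter> E \<in> null_sets M"
    using \<open>A \<in> sets M\<close> \<open>E \<in> sets M\<close> by (simp add: null_sets_def emeasure_eq_measure)
  then show ?thesis by (rule AE_I') (auto simp: E_def)
qed

lemma proper_imp_nu_zero_less_1:
  assumes proper: "AE \<omega> in M. (\<Sum>j. sb_weight v j \<omega>) = 1"
  shows "AE \<omega> in M. measure (\<nu> \<omega>) {0} < 1"
proof -
  define A where "A = (\<lambda>\<omega>. measure (\<nu> \<omega>) {0}) -` {1..} \<inter> space M"
  have A: "A \<in> sigma_of_rm M \<nu>" unfolding A_def by (rule vimage_nu_in_sigma_of_rm) auto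
  have "measure (\<nu> \<omega>) {0} = 1" if "\<omega> \<in> A" for \<omega>
    using that prob_space.prob_le_1[OF prob_space_nu, of \<omega> "{0}"] by (auto simp: A_def)
  then have "AE \<omega> in M. \<omega> \<in> A \<longrightarrow> v i \<omega> \<in> {0}" for i
    using A by (intro AE_v_in_if_nu_eq_1) auto
  then have "AE \<omega> in M. \<forall>i. \<omega> \<in> A \<longrightarrow> v i \<omega> = 0"
    unfolding AE_all_countable by simp
  with proper AE_space show ?thesis
  proof eventually_elim
    case (elim \<omega>)
    then have "\<omega> \<notin> A" by (auto simp: sb_weight_def)
    with elim show ?case by (auto simp: A_def)
  qed
qed

lemma measure_nu_Ioi_inverse_pos:
  assumes \<omega>: "\<omega> \<in> space M" and nu_0: "measure (\<nu> \<omega>) {0} < 1"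
  obtains q :: nat where "0 < measure (\<nu> \<omega>) {inverse (real (Suc q))<..}"
proof -
  interpret N: prob_space "\<nu> \<omega>" using \<omega> by (rule prob_space_nu)
  have sets_N: "sets (\<nu> \<omega>) = sets borel" using \<omega> by (rule sets_nu)
  have "emeasure (\<nu> \<omega>) {0..1} = 1"
    using nu_rpm \<omega> by (simp add: random_prob_01_def)
  then have "measure (\<nu> \<omega>) {0..1} = 1" by (simp add: N.emeasure_eq_measure)
  then have "0 < measure (\<nu> \<omega>) ({0..1} - {0})"
    using nu_0 sets_N by (subst N.finite_measure_Diff) auto
  also have "\<dots> \<le> measure (\<nu> \<omega>) {0<..}"
    using sets_N by (intro N.finite_measure_mono) auto
  finally have pos: "0 < measure (\<nu> \<omega>) {0<..}" .
  show ?thesis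
  proof (rule ccontr)
    assume "\<not> ?thesis"
    then have "measure (\<nu> \<omega>) {inverse (real (Suc q))<..} = 0" for q
      using measure_nonneg[of "\<nu> \<omega>"] that by (meson not_less order_antisym)
    then have "{inverse (real (Suc q))<..} \<in> null_sets (\<nu> \<omega>)" for q
      using sets_N by (simp add: null_sets_def N.emeasure_eq_measure)
    then have "(\<Union>q. {inverse (real (Suc q))<..}) \<in> null_sets (\<nu> \<omega>)" by blast
    moreover have "(\<Union>q. {inverse (real (Suc q))<..}) = {0::real<..}"
    proof (intro equalityI subsetI)
      fix x :: real assume "x \<in> {0<..}"
      then obtain q where "inverse (real (Suc q)) < x" using reals_Archimedean by auto
      then show "x \<in> (\<Union>q. {inverse (real (Suc q))<..})" by auto
    next
      fix x :: real assume "x \<in> (\<Union>q. {inverse (real (Suc q))<..})"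
      then obtain q where "inverse (real (Suc q)) < x" by auto
      moreover have "0 < inverse (real (Suc q))" by simp
      ultimately have "0 < x" by linarith
      then show "x \<in> {0<..}" by simp
    qed
    ultimately show False using pos by (simp add: measure_eq_0_null_sets)
  qed
qed

text \<open>Given \<nu>, the lengths are i.i.d.; on A each of them exceeds d with probability at least c,
  so the event that from some index m on none does has probability at most (1 - c)^n for all n.\<close>
lemma AE_frequently_v_gt:
  assumes A: "A \<in> sigma_of_rm M \<nu>" and c: "0 < c"
    and nu_A: "\<And>\<omega>. \<omega> \<in> A \<Longrightarrow> c \<le> measure (\<nu> \<omega>) {d<..}"
  shows "AE \<omega> in M. \<omega> \<in> A \<longrightarrow> (\<forall>m. \<exists>i\<ge>m. d < v i \<omega>)"
proof -
  have "A \<in> sets M" using A sigma_of_rm_subset by blast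
  define r where "r = max 0 (1 - c)"
  have r: "0 \<le> r" "r < 1" using c by (auto simp: r_def)
  define F where "F m = A \<inter> {\<omega> \<in> space M. \<forall>i\<ge>m. v i \<omega> \<le> d}" for m
  have "F m \<in> null_sets M" for m
  proof -
    define B where "B i = (if i < m then UNIV else {..d})" for i
    have B[measurable]: "B i \<in> sets borel" for i by (simp add: B_def)
    have "measure M (F m) \<le> r ^ n" for n
    proof -
      have "F m \<subseteq> A \<inter> {\<omega> \<in> space M. \<forall>i<m + n. v i \<omega> \<in> B i}"
        unfolding F_def B_def by auto
      moreover have "A \<inter> {\<omega> \<in> space M. \<forall>i<m + n. v i \<omega> \<in> B i} \<in> sets M"
        using \<open>A \<in> sets M\<close> by measurable
      ultimately have "measure M (F m) \<le> measure M (A \<inter> {\<omega> \<in> space M. \<forall>i<m + n. v i \<omega> \<in> B i})"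
        by (rule finite_measure_mono)
      also have "\<dots> \<le> r ^ n"
      proof (rule measure_v_in_le[OF B A])
        fix \<omega> assume "\<omega> \<in> A"
        then have \<omega>: "\<omega> \<in> space M" using \<open>A \<in> sets M\<close> sets.sets_into_space by blast
        interpret N: prob_space "\<nu> \<omega>" using \<omega> by (rule prob_space_nu)
        have "(\<Prod>i<m + k. measure (\<nu> \<omega>) (B i)) = measure (\<nu> \<omega>) {..d} ^ k" for k
          by (induction k) (simp_all add: B_def N.prob_space[unfolded space_nu[OF \<omega>]])
        moreover have "measure (\<nu> \<omega>) {..d} \<le> r"
        proof -
          have "UNIV - {d<..} = {..d}" by auto
          then have "measure (\<nu> \<omega>) {..d} = 1 - measure (\<nu> \<omega>) {d<..}"
            using N.prob_compl[of "{d<..}"] sets_nu[OF \<omega>] space_nu[OF \<omega>] by simp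
          with nu_A[OF \<open>\<omega> \<in> A\<close>] show ?thesis unfolding r_def by linarith
        qed
        ultimately show "(\<Prod>i<m + n. measure (\<nu> \<omega>) (B i)) \<le> r ^ n"
          by (simp add: power_mono)
      qed (use r in simp)
      finally show ?thesis .
    qed
    moreover have "(\<lambda>n. r ^ n) \<longlonglongrightarrow> 0" using r by (intro LIMSEQ_power_zero) auto
    ultimately have "measure M (F m) \<le> 0" by (intro LIMSEQ_le_const) auto
    moreover have "F m \<in> sets M" using \<open>A \<in> sets M\<close> by (simp add: F_def)
    ultimately show ?thesis by (simp add: null_sets_def emeasure_eq_measure measure_le_0_iff)
  qed
  then have "(\<Union>m. F m) \<in> null_sets M" by blast
  moreover have "{\<omega> \<in> space M. \<not> (\<omega> \<in> A \<longrightarrow> (\<forall>m. \<exists>i\<ge>m. d < v i \<omega>))} \<subseteq> (\<Union>m. F m)"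
    unfolding F_def by (auto simp: not_less[symmetric])
  ultimately show ?thesis by (rule AE_I')
qed

lemma nu_zero_less_1_imp_proper:
  assumes nu_0: "AE \<omega> in M. measure (\<nu> \<omega>) {0} < 1"
  shows "AE \<omega> in M. (\<Sum>j. sb_weight v j \<omega>) = 1"
proof -
  define d where "d q = inverse (real (Suc q))" for q :: nat
  define A where "A q k = (\<lambda>\<omega>. measure (\<nu> \<omega>) {d q<..}) -` {inverse (real (Suc k))..} \<inter> space M"
    for q k :: nat
  have frequently: "AE \<omega> in M. \<omega> \<in> A q k \<longrightarrow> (\<forall>m. \<exists>i\<ge>m. d q < v i \<omega>)" for q k
    by (rule AE_frequently_v_gt[where c = "inverse (real (Suc k))"])
       (auto simp: A_def intro: vimage_nu_in_sigma_of_rm)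
  have "AE \<omega> in M. \<forall>q k. \<omega> \<in> A q k \<longrightarrow> (\<forall>m. \<exists>i\<ge>m. d q < v i \<omega>)"
    by (intro AE_all_countable[THEN iffD2] allI) (rule frequently)
  with nu_0 AE_space show ?thesis
  proof eventually_elim
    case (elim \<omega>)
    then obtain q where "0 < measure (\<nu> \<omega>) {d q<..}"
      using measure_nu_Ioi_inverse_pos unfolding d_def by blast
    then obtain k where "inverse (real (Suc k)) < measure (\<nu> \<omega>) {d q<..}"
      using reals_Archimedean by blast
    then have "\<omega> \<in> A q k" using elim by (auto simp: A_def)
    with elim have "\<exists>i\<ge>m. d q < v i \<omega>" for m by blast
    moreover have "0 < d q" by (simp add: d_def)
    ultimately have "(\<Sum>j. stick_breaking (\<lambda>i. v i \<omega>) j) = 1"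
      using v_01 elim by (intro suminf_stick_breaking_eq_1[where d = "d q"]) auto
    then show ?case by (simp add: sb_weight_eq_stick_breaking)
  qed
qed

abbreviation \<mu> :: "'b \<Rightarrow> 'a measure" where
  "\<mu> \<equiv> ssp_measure (sb_weight v) \<xi> \<mu>0"

lemma borel_measurable_xi[measurable]: "\<xi> i \<in> borel_measurable M"
  using xi_indep unfolding indep_vars_def by auto

lemma borel_measurable_sb_weight[measurable]: "(\<lambda>\<omega>. sb_weight v j \<omega>) \<in> borel_measurable M"
  unfolding sb_weight_def by measurable

lemma sb_weight_nonneg: "\<omega> \<in> space M \<Longrightarrow> 0 \<le> sb_weight v j \<omega>"
  using v_01 by (simp add: sb_weight_eq_stick_breaking stick_breaking_nonneg)

lemma summable_sb_weight: "\<omega> \<in> space M \<Longrightarrow> summable (\<lambda>j. sb_weight v j \<omega>)"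
  using v_01 by (simp add: sb_weight_eq_stick_breaking summable_stick_breaking)

lemma suminf_sb_weight_le_1: "\<omega> \<in> space M \<Longrightarrow> (\<Sum>j. sb_weight v j \<omega>) \<le> 1"
  using v_01 by (simp add: sb_weight_eq_stick_breaking suminf_stick_breaking_le_1)

lemma mu_in_borel_probs: "\<omega> \<in> space M \<Longrightarrow> \<mu> \<omega> \<in> borel_probs"
  using prob_space_ssp_measure[OF sb_weight_nonneg summable_sb_weight suminf_sb_weight_le_1 mu0_prob mu0_sets]
  by (simp add: borel_probs_def)

lemma integral_mu:
  assumes "\<omega> \<in> space M" and "bounded_continuous f"
  shows "(\<integral>x. f x \<partial>\<mu> \<omega>)
    = (\<Sum>j. sb_weight v j \<omega> * f (\<xi> j \<omega>)) + (1 - (\<Sum>j. sb_weight v j \<omega>)) * (\<integral>x. f x \<partial>\<mu>0)"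
proof -
  obtain B where "\<And>x. \<bar>f x\<bar> \<le> B"
    using assms(2) by (auto simp: bounded_continuous_def bounded_iff)
  then show ?thesis
    using assms sb_weight_nonneg summable_sb_weight suminf_sb_weight_le_1 mu0_prob mu0_sets
      borel_measurable_bounded_continuous
    by (intro integral_ssp_measure) auto
qed

lemma sets_weak_nbhd_mu:
  assumes "\<forall>f\<in>set fs. bounded_continuous f"
  shows "{\<omega> \<in> space M. \<mu> \<omega> \<in> weak_nbhd P fs \<epsilon>} \<in> sets M"
proof -
  have [measurable]: "(\<lambda>\<omega>. \<integral>x. f x \<partial>\<mu> \<omega>) \<in> borel_measurable M" if "f \<in> set fs" for f
  proof -
    have [measurable]: "f \<in> borel_measurable borel"
      using assms that by (simp add: borel_measurable_bounded_continuous)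
    show ?thesis
      using assms that by (subst measurable_cong[OF integral_mu]) auto
  qed
  have "{\<omega> \<in> space M. \<mu> \<omega> \<in> weak_nbhd P fs \<epsilon>}
      = {\<omega> \<in> space M. \<forall>f\<in>set fs. \<bar>(\<integral>x. f x \<partial>\<mu> \<omega>) - (\<integral>x. f x \<partial>P)\<bar> < \<epsilon>}"
    using mu_in_borel_probs by (auto simp: weak_nbhd_def)
  also have "\<dots> \<in> sets M"
    by (intro sets.sets_Collect_finite_All) auto
  finally show ?thesis .
qed

lemma AE_xi_notin:
  assumes "U \<in> sets borel" and "emeasure \<mu>0 U = 0"
  shows "AE \<omega> in M. \<forall>j. \<xi> j \<omega> \<notin> U"
proof -
  have "\<xi> j -` U \<inter> space M \<in> null_sets M" for j
    using assms xi_law[of j] emeasure_distr[of "\<xi> j" M borel U] by (simp add: null_sets_def)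
  then have "AE \<omega> in M. \<xi> j \<omega> \<notin> U" for j
    by (rule AE_I') auto
  then show ?thesis by (simp add: AE_all_countable)
qed

lemma law_support_subset: "law_support M \<mu> \<subseteq> {P \<in> borel_probs. msupport P \<subseteq> msupport \<mu>0}"
proof safe
  fix P x assume P: "P \<in> law_support M \<mu>" and x: "x \<in> msupport P"
  have "P \<in> borel_probs" using P by (simp add: law_support_def)
  show "x \<in> msupport \<mu>0"
  proof (rule ccontr)
    assume "x \<notin> msupport \<mu>0"
    then obtain U where U: "open U" "x \<in> U" "emeasure \<mu>0 U = 0"
      unfolding msupport_def by (auto simp: not_less)
    obtain f where f: "bounded_continuous f" "\<And>y. f y \<in> {0..1}" "f x = 1" "\<And>y. y \<notin> U \<Longrightarrow> f y = 0"
      using exists_bump_function[OF U(1,2)] by blast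
    define e where "e = (\<integral>y. f y \<partial>P)"
    have "0 < e"
      unfolding e_def using \<open>P \<in> borel_probs\<close> f x by (intro integral_pos_at_msupport) auto
    have "(\<integral>y. f y \<partial>\<mu>0) = 0"
    proof (rule integral_eq_zero_AE)
      have "U \<in> null_sets \<mu>0" using U mu0_sets by (simp add: null_sets_def)
      then show "AE y in \<mu>0. f y = 0" by (rule AE_I') (auto intro: f(4))
    qed
    then have zero: "(\<integral>y. f y \<partial>\<mu> \<omega>) = 0" if "\<omega> \<in> space M" "\<forall>j. \<xi> j \<omega> \<notin> U" for \<omega>
      using that f by (simp add: integral_mu)
    have "AE \<omega> in M. \<forall>j. \<xi> j \<omega> \<notin> U" using U by (intro AE_xi_notin) auto
    with AE_space have "AE \<omega> in M. \<mu> \<omega> \<notin> weak_nbhd P [f] e"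
    proof eventually_elim
      case (elim \<omega>)
      with zero \<open>0 < e\<close> show ?case by (simp add: weak_nbhd_def e_def)
    qed
    moreover have "{\<omega> \<in> space M. \<mu> \<omega> \<in> weak_nbhd P [f] e} \<in> sets M"
      using f(1) by (intro sets_weak_nbhd_mu) simp
    ultimately have "{\<omega> \<in> space M. \<mu> \<omega> \<in> weak_nbhd P [f] e} \<in> null_sets M"
      using AE_iff_null[of M "\<lambda>\<omega>. \<mu> \<omega> \<notin> weak_nbhd P [f] e"] by simp
    moreover have "0 < measure M {\<omega> \<in> space M. \<mu> \<omega> \<in> weak_nbhd P [f] e}"
      using P f(1) \<open>0 < e\<close> by (simp add: law_support_def)
    ultimately show False by (simp add: measure_eq_0_null_sets)
  qed
qed (simp add: law_support_def)

lemma prob_v_in_pos: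
  assumes I: "I \<in> sets borel" and pos: "0 < emeasure (mean_measure M \<nu>) I"
  shows "0 < measure M {\<omega> \<in> space M. \<forall>i<N. v i \<omega> \<in> I}"
proof -
  have mean_pos: "0 < (\<integral>\<^sup>+\<omega>. emeasure (\<nu> \<omega>) I \<partial>M)"
    using pos unfolding mean_measure_def emeasure_measure_of_conv by (auto split: if_splits)
  define g where "g \<omega> = measure (\<nu> \<omega>) I" for \<omega>
  have [measurable]: "g \<in> borel_measurable M" unfolding g_def using I by measurable
  have g_01: "0 \<le> g \<omega> \<and> g \<omega> \<le> 1" if "\<omega> \<in> space M" for \<omega>
    using prob_space.prob_le_1[OF prob_space_nu[OF that]] by (simp add: g_def)
  have "space M \<in> sigma_of_rm M \<nu>" unfolding sigma_of_rm_def by (rule sigma_sets_top)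
  then have "measure M {\<omega> \<in> space M. \<forall>i<N. v i \<omega> \<in> I} = (\<integral>\<omega>. g \<omega> ^ N \<partial>M)"
    using directsD[of "\<lambda>_. I" "space M" N] I
    by (simp add: Int_absorb1 g_def cong: Bochner_Integration.integral_cong)
  moreover have "0 < (\<integral>\<omega>. g \<omega> ^ N \<partial>M)"
  proof (rule ccontr)
    assume "\<not> 0 < (\<integral>\<omega>. g \<omega> ^ N \<partial>M)"
    have int: "integrable M (\<lambda>\<omega>. g \<omega> ^ N)"
      using g_01 by (intro integrable_const_bound[of _ 1]) (auto intro: power_le_one)
    have nonneg: "AE \<omega> in M. 0 \<le> g \<omega> ^ N" using g_01 by (intro AE_I2) simp
    have "(\<integral>\<omega>. g \<omega> ^ N \<partial>M) = 0"
      using \<open>\<not> 0 < (\<integral>\<omega>. g \<omega> ^ N \<partial>M)\<close> integral_nonneg_AE[OF nonneg] by linarith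
    then have "AE \<omega> in M. g \<omega> ^ N = 0"
      by (subst (asm) integral_nonneg_eq_0_iff_AE[OF int nonneg])
    then have "AE \<omega> in M. emeasure (\<nu> \<omega>) I = 0"
      using AE_space
    proof eventually_elim
      case (elim \<omega>)
      interpret N: prob_space "\<nu> \<omega>" using elim(2) by (rule prob_space_nu)
      from elim(1) show ?case by (simp add: g_def N.emeasure_eq_measure)
    qed
    then have "(\<integral>\<^sup>+\<omega>. emeasure (\<nu> \<omega>) I \<partial>M) = 0" by (simp add: nn_integral_cong_AE)
    with mean_pos show False by simp
  qed
  ultimately show ?thesis by simp
qed

lemma prob_xi_in_pos:
  assumes V: "\<And>j. V j \<in> sets borel" and pos: "\<And>j. 0 < emeasure \<mu>0 (V j)"
  shows "0 < measure M {\<omega> \<in> space M. \<forall>j<N. \<xi> j \<omega> \<in> V j}"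
proof (cases "N = 0")
  case True
  then show ?thesis using prob_space by simp
next
  case False
  interpret \<mu>0: prob_space \<mu>0 by (rule mu0_prob)
  have "{\<omega> \<in> space M. \<forall>j<N. \<xi> j \<omega> \<in> V j} = (\<Inter>j\<in>{..<N}. \<xi> j -` V j \<inter> space M)"
    using False by auto
  also have "measure M \<dots> = (\<Prod>j<N. measure M (\<xi> j -` V j \<inter> space M))"
    using False V by (intro indep_varsD[OF xi_indep]) auto
  also have "\<dots> = (\<Prod>j<N. measure \<mu>0 (V j))"
  proof (rule prod.cong)
    show "measure M (\<xi> j -` V j \<inter> space M) = measure \<mu>0 (V j)" for j
      using measure_distr[of "\<xi> j" M borel "V j"] V xi_law[of j] by simp
  qed simp
  also have "0 < \<dots>"
    using pos by (intro prod_pos) (simp add: \<mu>0.emeasure_eq_measure)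
  finally show ?thesis .
qed

lemma emeasure_xi_v_indep:
  assumes [measurable]: "\<And>j. V j \<in> sets borel" and [measurable]: "I \<in> sets borel"
  shows "emeasure M ({\<omega> \<in> space M. \<forall>j<N. \<xi> j \<omega> \<in> V j} \<inter> {\<omega> \<in> space M. \<forall>i<N. v i \<omega> \<in> I})
    = emeasure M {\<omega> \<in> space M. \<forall>j<N. \<xi> j \<omega> \<in> V j} * emeasure M {\<omega> \<in> space M. \<forall>i<N. v i \<omega> \<in> I}"
proof -
  define SV where "SV = {x \<in> space (PiM UNIV (\<lambda>_::nat. borel :: 'a measure)). \<forall>j<N. x j \<in> V j}"
  define SI where "SI = {x \<in> space (PiM UNIV (\<lambda>_::nat. borel :: real measure)). \<forall>i<N. x i \<in> I}"
  have [measurable]: "SV \<in> sets (PiM UNIV (\<lambda>_. borel))" "SI \<in> sets (PiM UNIV (\<lambda>_. borel))"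
    unfolding SV_def SI_def by measurable
  have [measurable]: "(\<lambda>\<omega> i. \<xi> i \<omega>) \<in> measurable M (PiM UNIV (\<lambda>_. borel))"
    "(\<lambda>\<omega> i. v i \<omega>) \<in> measurable M (PiM UNIV (\<lambda>_. borel))"
    by (auto intro: measurable_PiM_single')
  interpret v_law: prob_space "distr M (PiM UNIV (\<lambda>_. borel)) (\<lambda>\<omega> i. v i \<omega>)"
    by (rule prob_space_distr) measurable
  have "{\<omega> \<in> space M. \<forall>j<N. \<xi> j \<omega> \<in> V j} \<inter> {\<omega> \<in> space M. \<forall>i<N. v i \<omega> \<in> I}
      = (\<lambda>\<omega>. (\<lambda>i. \<xi> i \<omega>, \<lambda>i. v i \<omega>)) -` (SV \<times> SI) \<inter> space M"
    by (auto simp: SV_def SI_def space_PiM)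
  then have "emeasure M ({\<omega> \<in> space M. \<forall>j<N. \<xi> j \<omega> \<in> V j} \<inter> {\<omega> \<in> space M. \<forall>i<N. v i \<omega> \<in> I})
      = emeasure (distr M (PiM UNIV (\<lambda>_. borel) \<Otimes>\<^sub>M PiM UNIV (\<lambda>_. borel))
          (\<lambda>\<omega>. (\<lambda>i. \<xi> i \<omega>, \<lambda>i. v i \<omega>))) (SV \<times> SI)"
    by (simp add: emeasure_distr)
  also have "\<dots> = emeasure (distr M (PiM UNIV (\<lambda>_. borel)) (\<lambda>\<omega> i. \<xi> i \<omega>)) SV
      * emeasure (distr M (PiM UNIV (\<lambda>_. borel)) (\<lambda>\<omega> i. v i \<omega>)) SI"
    unfolding xi_v_indep by (rule v_law.emeasure_pair_measure_Times) simp_all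
  also have "\<dots> = emeasure M {\<omega> \<in> space M. \<forall>j<N. \<xi> j \<omega> \<in> V j}
      * emeasure M {\<omega> \<in> space M. \<forall>i<N. v i \<omega> \<in> I}"
  proof -
    have "(\<lambda>\<omega> i. \<xi> i \<omega>) -` SV \<inter> space M = {\<omega> \<in> space M. \<forall>j<N. \<xi> j \<omega> \<in> V j}"
      "(\<lambda>\<omega> i. v i \<omega>) -` SI \<inter> space M = {\<omega> \<in> space M. \<forall>i<N. v i \<omega> \<in> I}"
      by (auto simp: SV_def SI_def space_PiM)
    then show ?thesis by (simp add: emeasure_distr)
  qed
  finally show ?thesis .
qed

lemma prob_xi_v_in_pos:
  assumes "\<And>j. V j \<in> sets borel" and "\<And>j. 0 < emeasure \<mu>0 (V j)"
    and "I \<in> sets borel" and "0 < emeasure (mean_measure M \<nu>) I"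
  shows "0 < measure M ({\<omega> \<in> space M. \<forall>j<N. \<xi> j \<omega> \<in> V j} \<inter> {\<omega> \<in> space M. \<forall>i<N. v i \<omega> \<in> I})"
  using emeasure_xi_v_indep[of V I N] prob_xi_in_pos[of V N] prob_v_in_pos[of I N] assms
  by (simp add: emeasure_eq_measure ennreal_mult[symmetric])

lemma prob_block_event_pos:
  assumes U: "\<And>l. U l \<in> sets borel" "\<And>l. l < L \<Longrightarrow> 0 < emeasure \<mu>0 (U l)" and "n 0 = 0"
    and I: "I \<in> sets borel" "0 < emeasure (mean_measure M \<nu>) I"
  shows "0 < measure M ({\<omega> \<in> space M. \<forall>j<n L. \<xi> j \<omega> \<in> U (block_of n j)}
    \<inter> {\<omega> \<in> space M. \<forall>i<n L. v i \<omega> \<in> I})"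
proof -
  define V where "V j = (if j < n L then U (block_of n j) else UNIV)" for j
  have "0 < emeasure \<mu>0 (V j)" for j
  proof (cases "j < n L")
    case True
    then show ?thesis using U(2) block_of_less[OF \<open>n 0 = 0\<close> True] by (simp add: V_def)
  next
    case False
    then show ?thesis
      using prob_space.emeasure_space_1[OF mu0_prob] sets_eq_imp_space_eq[OF mu0_sets]
      by (simp add: V_def)
  qed
  then have "0 < measure M ({\<omega> \<in> space M. \<forall>j<n L. \<xi> j \<omega> \<in> V j}
      \<inter> {\<omega> \<in> space M. \<forall>i<n L. v i \<omega> \<in> I})"
    using U(1) I by (intro prob_xi_v_in_pos) (auto simp: V_def)
  then show ?thesis by (simp add: V_def)
qed

lemma integral_mu_near_discrete:
  assumes \<omega>: "\<omega> \<in> space M" and f: "bounded_continuous f" "\<And>y. \<bar>f y\<bar> \<le> B"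
    and n: "mono n" "n 0 = 0"
    and prod_approx: "\<And>l. l \<le> L \<Longrightarrow> \<bar>(\<Prod>i<n l. 1 - v i \<omega>) - (1 - (\<Sum>k<l. p k))\<bar> \<le> \<eta>"
    and p_sum: "(\<Sum>l<L. p l) = 1"
    and close: "\<And>l j. l < L \<Longrightarrow> j \<in> {n l..<n (Suc l)} \<Longrightarrow> \<bar>f (\<xi> j \<omega>) - f (x l)\<bar> \<le> \<delta>"
    and "0 \<le> \<delta>"
  shows "\<bar>(\<integral>y. f y \<partial>\<mu> \<omega>) - (\<Sum>l<L. p l * f (x l))\<bar> \<le> B * \<eta> + \<delta> + 2 * \<eta> * B * L"
proof -
  interpret \<mu>0: prob_space \<mu>0 by (rule mu0_prob)
  have int: "integrable \<mu>0 f"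
    using f borel_measurable_bounded_continuous
    by (intro \<mu>0.integrable_const_bound[of _ B]) (auto simp: measurable_cong_sets[OF mu0_sets refl])
  have "(\<integral>y. f y \<partial>\<mu>0) \<le> B"
    using int f(2) by (intro \<mu>0.integral_le_const AE_I2) (auto simp: abs_le_iff)
  moreover have "- B \<le> (\<integral>y. f y \<partial>\<mu>0)"
  proof (intro \<mu>0.integral_ge_const AE_I2 int)
    show "- B \<le> f y" for y using f(2)[of y] by linarith
  qed
  ultimately have I_bound: "\<bar>\<integral>y. f y \<partial>\<mu>0\<bar> \<le> B" by simp
  have "\<bar>(\<Sum>j. stick_breaking (\<lambda>i. v i \<omega>) j * f (\<xi> j \<omega>))
      + (1 - (\<Sum>j. stick_breaking (\<lambda>i. v i \<omega>) j)) * (\<integral>y. f y \<partial>\<mu>0)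
      - (\<Sum>l<L. p l * f (x l))\<bar> \<le> B * \<eta> + \<delta> + 2 * \<eta> * B * L"
    using v_01[OF \<omega>] n prod_approx p_sum f(2) f(2) I_bound close \<open>0 \<le> \<delta>\<close>
    by (rule stick_breaking_mixture_approx[where u = "\<lambda>i. v i \<omega>" and g = "\<lambda>j. f (\<xi> j \<omega>)"
          and h = "\<lambda>l. f (x l)"])
  then show ?thesis by (simp add: integral_mu[OF \<omega> f(1)] sb_weight_eq_stick_breaking)
qed

lemma supported_subset_law_support:
  assumes mean_support: "{0<..<\<epsilon>0} \<subseteq> msupport (mean_measure M \<nu>)" and "0 < \<epsilon>0"
  shows "{P \<in> borel_probs. msupport P \<subseteq> msupport \<mu>0} \<subseteq> law_support M \<mu>"
proof safe
  fix P assume P: "P \<in> borel_probs" and P_support: "msupport P \<subseteq> msupport \<mu>0"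
  have "0 < measure M {\<omega> \<in> space M. \<mu> \<omega> \<in> weak_nbhd P fs \<epsilon>}"
    if fs: "\<forall>f\<in>set fs. bounded_continuous f" and "0 < \<epsilon>" for fs \<epsilon>
  proof -
    obtain B where B: "1 \<le> B" "\<And>f y. f \<in> set fs \<Longrightarrow> \<bar>f y\<bar> \<le> B"
      using bounded_continuous_list_bound[OF fs] by blast
    define \<delta> where "\<delta> = \<epsilon> / 4"
    have "0 < \<delta>" using \<open>0 < \<epsilon>\<close> by (simp add: \<delta>_def)
    obtain L :: nat and x p where x: "\<And>l. l < L \<Longrightarrow> x l \<in> msupport P"
      and p: "\<And>l. l < L \<Longrightarrow> 0 \<le> p l" "(\<Sum>l<L. p l) = 1"
      and discrete: "\<And>f. f \<in> set fs \<Longrightarrow> \<bar>(\<integral>y. f y \<partial>P) - (\<Sum>l<L. p l * f (x l))\<bar> \<le> \<delta>"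
      using exists_discrete_approx[OF P fs \<open>0 < \<delta>\<close>] by blast
    define C where "C = B * (2 * real L + 1)"
    have "0 < C" using B(1) by (simp add: C_def)
    define \<eta> where "\<eta> = \<epsilon> / (4 * C)"
    have "0 < \<eta>" using \<open>0 < \<epsilon>\<close> \<open>0 < C\<close> by (simp add: \<eta>_def)
    have "B * \<eta> + 2 * \<eta> * B * L = C * \<eta>" by (simp add: C_def algebra_simps)
    also have "\<dots> = \<epsilon> / 4" using \<open>0 < C\<close> by (simp add: \<eta>_def field_simps)
    finally have error: "B * \<eta> + \<delta> + 2 * \<eta> * B * L = \<epsilon> / 2" by (simp add: \<delta>_def)
    obtain a b :: real and n :: "nat \<Rightarrow> nat" where ab: "0 < a" "a < b" "b < \<epsilon>0" and n: "n 0 = 0" "mono n"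
      and prod_approx: "\<And>u l. (\<And>i. i < n L \<Longrightarrow> u i \<in> {a<..<b}) \<Longrightarrow> l \<le> L \<Longrightarrow>
          \<bar>(\<Prod>i<n l. 1 - u i) - (1 - (\<Sum>k<l. p k))\<bar> \<le> \<eta>"
      using exists_block_schedule[OF p \<open>0 < \<eta>\<close> \<open>0 < \<epsilon>0\<close>] by blast
    define U where "U l = (\<Inter>f\<in>set fs. {y. \<bar>f y - f (x l)\<bar> < \<delta>})" for l
    have "open (U l)" for l unfolding U_def using fs by (rule open_Inter_near)
    have U_pos: "0 < emeasure \<mu>0 (U l)" if "l < L" for l
    proof -
      have "x l \<in> msupport \<mu>0" using x[OF that] P_support by blast
      moreover have "x l \<in> U l" using \<open>0 < \<delta>\<close> by (simp add: U_def)
      ultimately show ?thesis using \<open>open (U l)\<close> unfolding msupport_def by blast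
    qed
    have "(a + b) / 2 \<in> msupport (mean_measure M \<nu>)" using mean_support ab by auto
    then have "0 < emeasure (mean_measure M \<nu>) {a<..<b}"
      unfolding msupport_def using ab by auto
    then have "0 < measure M ({\<omega> \<in> space M. \<forall>j<n L. \<xi> j \<omega> \<in> U (block_of n j)}
        \<inter> {\<omega> \<in> space M. \<forall>i<n L. v i \<omega> \<in> {a<..<b}})"
      using \<open>\<And>l. open (U l)\<close> U_pos n(1) by (intro prob_block_event_pos) auto
    also have "\<dots> \<le> measure M {\<omega> \<in> space M. \<mu> \<omega> \<in> weak_nbhd P fs \<epsilon>}"
    proof (intro finite_measure_mono subsetI sets_weak_nbhd_mu[OF fs])
      fix \<omega>
      assume "\<omega> \<in> {\<omega> \<in> space M. \<forall>j<n L. \<xi> j \<omega> \<in> U (block_of n j)}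
        \<inter> {\<omega> \<in> space M. \<forall>i<n L. v i \<omega> \<in> {a<..<b}}"
      then have \<omega>: "\<omega> \<in> space M" and atoms: "\<And>j. j < n L \<Longrightarrow> \<xi> j \<omega> \<in> U (block_of n j)"
        and lengths: "\<And>i. i < n L \<Longrightarrow> v i \<omega> \<in> {a<..<b}" by auto
      have "\<bar>(\<integral>y. f y \<partial>\<mu> \<omega>) - (\<integral>y. f y \<partial>P)\<bar> < \<epsilon>" if f: "f \<in> set fs" for f
      proof -
        have close: "\<bar>f (\<xi> j \<omega>) - f (x l)\<bar> \<le> \<delta>" if "l < L" "j \<in> {n l..<n (Suc l)}" for l j
        proof -
          have "j < n L" using that monoD[OF n(2), of "Suc l" L] by auto
          moreover have "block_of n j = l" using that by (intro block_of_eq[OF n(2)]) auto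
          ultimately have "\<xi> j \<omega> \<in> U l" using atoms[of j] by simp
          then show ?thesis using f by (auto simp: U_def less_imp_le)
        qed
        have "bounded_continuous f" using fs f by blast
        from integral_mu_near_discrete[OF \<omega> this B(2)[OF f] n(2,1) prod_approx[OF lengths] p(2)
            close less_imp_le[OF \<open>0 < \<delta>\<close>]]
        have "\<bar>(\<integral>y. f y \<partial>\<mu> \<omega>) - (\<Sum>l<L. p l * f (x l))\<bar> \<le> \<epsilon> / 2"
          unfolding error .
        with discrete[OF f] show ?thesis unfolding \<delta>_def using \<open>0 < \<epsilon>\<close> by linarith
      qed
      with \<omega> mu_in_borel_probs show "\<omega> \<in> {\<omega> \<in> space M. \<mu> \<omega> \<in> weak_nbhd P fs \<epsilon>}"
        by (simp add: weak_nbhd_def)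
    qed
    finally show ?thesis .
  qed
  with P show "P \<in> law_support M \<mu>" by (simp add: law_support_def)
qed

end

theorem theorem1:
  fixes M :: "'b measure"
    and \<mu>0 :: "'a::polish_space measure"
    and v :: "nat \<Rightarrow> 'b \<Rightarrow> real"
    and \<xi> :: "nat \<Rightarrow> 'b \<Rightarrow> 'a"
    and \<nu> :: "'b \<Rightarrow> real measure"
  assumes M: "prob_space M"
    and mu0_prob: "prob_space \<mu>0" and mu0_sets: "sets \<mu>0 = sets borel"
    and mu0_diffuse: "\<And>x. emeasure \<mu>0 {x} = 0"
    and v_rv: "\<And>i. v i \<in> borel_measurable M"
    and v_01: "\<And>i \<omega>. \<omega> \<in> space M \<Longrightarrow> v i \<omega> \<in> {0..1}"
    and v_exch: "exchangeable M v"
    and nu_rpm: "random_prob_01 M \<nu>"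
    and nu_directs: "directs M \<nu> v"
    and xi_indep: "prob_space.indep_vars M (\<lambda>_. borel) \<xi> UNIV"
    and xi_law: "\<And>i. distr M borel (\<xi> i) = \<mu>0"
    and xi_v_indep: "distr M (PiM UNIV (\<lambda>_. borel) \<Otimes>\<^sub>M PiM UNIV (\<lambda>_. borel))
                       (\<lambda>\<omega>. (\<lambda>i. \<xi> i \<omega>, \<lambda>i. v i \<omega>))
                     = distr M (PiM UNIV (\<lambda>_. borel)) (\<lambda>\<omega> i. \<xi> i \<omega>)
                       \<Otimes>\<^sub>M distr M (PiM UNIV (\<lambda>_. borel)) (\<lambda>\<omega> i. v i \<omega>)"
  shows "((\<exists>\<epsilon>>0. {0<..<\<epsilon>} \<subseteq> msupport (mean_measure M \<nu>))
            \<longrightarrow> full_support M (ssp_measure (sb_weight v) \<xi> \<mu>0) \<mu>0)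
       \<and> ((AE \<omega> in M. (\<Sum>j. sb_weight v j \<omega>) = 1) \<longleftrightarrow> (AE \<omega> in M. measure (\<nu> \<omega>) {0} < 1))"
proof -
  interpret esb M \<mu>0 v \<xi> \<nu>
    using M mu0_prob mu0_sets v_rv v_01 nu_rpm nu_directs xi_indep xi_law xi_v_indep
    by (rule esb.intro)
  have "full_support M \<mu> \<mu>0" if "0 < \<epsilon>" "{0<..<\<epsilon>} \<subseteq> msupport (mean_measure M \<nu>)" for \<epsilon>
    unfolding full_support_def
    using law_support_subset supported_subset_law_support[OF that(2,1)] by (rule subset_antisym)
  then show ?thesis
    using proper_imp_nu_zero_less_1 nu_zero_less_1_imp_proper by blast
qed

end
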